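(* Let $F,G\colon\mathbb{C}^{a+b+1}\to\mathbb{C}^{A+B+1}$ be homogeneous polynomial maps (representing rational maps $\mathbb{P}^{a+b}\dashrightarrow\mathbb{P}^{A+B}$) each taking $HQ(a,b+1)$ to $HQ(A,B+1)$ where defined. Suppose there exist $\tau\in\operatorname{Aut}(HQ(a,b+1))$ and $\chi\in\operatorname{Aut}(HQ(A,B+1))$, represented by linear maps, with $F\circ\tau=\chi\circ G$. Let $q_F,q_G$ be the corresponding quotients. Then $\operatorname{gin}(\mathcal{I}(H(q_F)))=\operatorname{gin}(\mathcal{I}(H(q_G)))$.
   Context: For $Z\in\mathbb{C}^{a+b+1}$ with coordinates $Z_0,\dots,Z_{a+b}$, $\|Z\|_{b+1}^2=-\sum_{j=0}^{b}|Z_j|^2+\sum_{j=b+1}^{a+b}|Z_j|^2$ (similarly $\|W\|_{B+1}^2$ on $\mathbb{C}^{A+B+1}$). $HQ(a,b+1)=\{Z\in\mathbb{P}^{a+b}:\|Z\|_{b+1}^2=0\}$. $\operatorname{Aut}(HQ(a,b+1))$ consists of automorphisms of $\mathbb{P}^{a+b}$ given by invertible linear maps $T$ with $\|TZ\|_{b+1}^2=\lambda\|Z\|_{b+1}^2$ for some real $\lambda\neq0$. The quotient of $F$ is the bihomogeneous polynomial $q_F(Z,\bar Z)$ with $\|F(Z)\|_{B+1}^2=\|Z\|_{b+1}^2\,q_F(Z,\bar Z)$. A holomorphic decomposition of $q$ is $q(Z,\bar Z)=\|h_+(Z)\|^2-\|h_-(Z)\|^2$ with $h_\pm$ homogeneous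 polynomial maps whose components together are linearly independent; $H(q)=\{h_+,h_-\}$, and $\mathcal{I}(H(q))$ is the ideal generated by all components of $h_+,h_-$ (independent of the choice of decomposition). Monomial order on $Z_0,\dots,Z_n$: a fixed total order with $Z_0>\dots>Z_n$, multiplicative, and with lower total degree monomials larger. For homogeneous $P$, $\operatorname{in}(P)$ is its largest monomial with nonzero coefficient; $\operatorname{in}(\mathcal{I})$ is the ideal generated by $\operatorname{in}(P)$, $P\in\mathcal{I}$; $\operatorname{gin}(\mathcal{I})=\operatorname{in}(\mathcal{I}\circ T)$ for $T$ in the dense open set of invertible linear maps on which this is constant (Galligo's theorem). *)

theory Defs
  imports Complex_Main "HOL-Library.Poly_Mapping"
begin

text \<open>Polynomials in the variables Z_0, Z_1, ... with complex coefficients,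
  represented as finitely supported maps from exponent vectors (monomials) to
  coefficients.  Only the variables Z_0..Z_n are used when working on
  C^(n+1).\<close>

type_synonym mon = "nat \<Rightarrow>\<^sub>0 nat"
type_synonym cpoly = "mon \<Rightarrow>\<^sub>0 complex"

definition const :: "complex \<Rightarrow> cpoly" where
  "const c = Poly_Mapping.single 0 c"

definition Var :: "nat \<Rightarrow> cpoly" where
  "Var i = Poly_Mapping.single (Poly_Mapping.single i 1) 1"

definition monom :: "mon \<Rightarrow> cpoly" where
  "monom \<alpha> = Poly_Mapping.single \<alpha> 1"

definition mdeg :: "mon \<Rightarrow> nat" where
  "mdeg \<alpha> = (\<Sum>i\<in>Poly_Mapping.keys \<alpha>. Poly_Mapping.lookup \<alpha> i)"

definition mon_in_vars :: "nat \<Rightarrow> mon \<Rightarrow> bool" where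
  "mon_in_vars n \<alpha> \<longleftrightarrow> Poly_Mapping.keys \<alpha> \<subseteq> {..n}"

definition in_vars :: "nat \<Rightarrow> cpoly \<Rightarrow> bool" where
  "in_vars n p \<longleftrightarrow> (\<forall>\<alpha>\<in>Poly_Mapping.keys p. mon_in_vars n \<alpha>)"

definition homog :: "nat \<Rightarrow> cpoly \<Rightarrow> bool" where
  "homog d p \<longleftrightarrow> (\<forall>\<alpha>\<in>Poly_Mapping.keys p. mdeg \<alpha> = d)"

definition is_homog :: "cpoly \<Rightarrow> bool" where
  "is_homog p \<longleftrightarrow> (\<exists>d. homog d p)"

definition mval :: "mon \<Rightarrow> (nat \<Rightarrow> complex) \<Rightarrow> complex" where
  "mval \<alpha> Z = (\<Prod>i\<in>Poly_Mapping.keys \<alpha>. Z i ^ Poly_Mapping.lookup \<alpha> i)"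

definition eval :: "cpoly \<Rightarrow> (nat \<Rightarrow> complex) \<Rightarrow> complex" where
  "eval p Z = (\<Sum>\<alpha>\<in>Poly_Mapping.keys p. Poly_Mapping.lookup p \<alpha> * mval \<alpha> Z)"

definition hom_poly_map :: "nat \<Rightarrow> nat \<Rightarrow> (nat \<Rightarrow> cpoly) \<Rightarrow> bool" where
  "hom_poly_map n N F \<longleftrightarrow> (\<exists>d. \<forall>k\<le>N. in_vars n (F k) \<and> homog d (F k))"

definition map_val :: "nat \<Rightarrow> (nat \<Rightarrow> cpoly) \<Rightarrow> (nat \<Rightarrow> complex) \<Rightarrow> (nat \<Rightarrow> complex)" where
  "map_val N F Z = (\<lambda>k. if k \<le> N then eval (F k) Z else 0)"

text \<open>The Hermitian form ||Z||^2_{b+1} on C^(n+1), n = a+b: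
  minus the squares of Z_0..Z_b plus the squares of Z_{b+1}..Z_n.\<close>
definition hform :: "nat \<Rightarrow> nat \<Rightarrow> (nat \<Rightarrow> complex) \<Rightarrow> real" where
  "hform b n Z = - (\<Sum>j\<in>{..b}. (cmod (Z j))\<^sup>2) + (\<Sum>j\<in>{b+1..n}. (cmod (Z j))\<^sup>2)"

definition maps_HQ :: "nat \<Rightarrow> nat \<Rightarrow> nat \<Rightarrow> nat \<Rightarrow> (nat \<Rightarrow> cpoly) \<Rightarrow> bool" where
  "maps_HQ a b A B F \<longleftrightarrow>
     (\<forall>Z. (\<exists>i\<le>a+b. Z i \<noteq> 0) \<and> hform b (a+b) Z = 0 \<and> (\<exists>k\<le>A+B. eval (F k) Z \<noteq> 0)
          \<longrightarrow> hform B (A+B) (map_val (A+B) F Z) = 0)"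

definition is_mat :: "nat \<Rightarrow> (nat \<Rightarrow> nat \<Rightarrow> complex) \<Rightarrow> bool" where
  "is_mat n T \<longleftrightarrow> (\<forall>i j. (i > n \<or> j > n) \<longrightarrow> T i j = 0)"

definition mat_app :: "nat \<Rightarrow> (nat \<Rightarrow> nat \<Rightarrow> complex) \<Rightarrow> (nat \<Rightarrow> complex) \<Rightarrow> (nat \<Rightarrow> complex)" where
  "mat_app n T Z = (\<lambda>i. if i \<le> n then (\<Sum>j\<le>n. T i j * Z j) else 0)"

definition invertible_mat :: "nat \<Rightarrow> (nat \<Rightarrow> nat \<Rightarrow> complex) \<Rightarrow> bool" where
  "invertible_mat n T \<longleftrightarrow> is_mat n T \<and>
     (\<exists>S. \<forall>i\<le>n. \<forall>k\<le>n. (\<Sum>j\<le>n. S i j * T j k) = (if i = k then 1 else 0))"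

definition aut_HQ :: "nat \<Rightarrow> nat \<Rightarrow> (nat \<Rightarrow> nat \<Rightarrow> complex) \<Rightarrow> bool" where
  "aut_HQ a b T \<longleftrightarrow> invertible_mat (a+b) T \<and>
     (\<exists>c::real. c \<noteq> 0 \<and> (\<forall>Z. hform b (a+b) (mat_app (a+b) T Z) = c * hform b (a+b) Z))"

text \<open>Bihomogeneous polynomials in Z and conj Z: coefficients c_{alpha,beta}
  of Z^alpha conj(Z)^beta.\<close>
type_synonym bpoly = "(mon \<times> mon) \<Rightarrow>\<^sub>0 complex"

definition bieval :: "bpoly \<Rightarrow> (nat \<Rightarrow> complex) \<Rightarrow> complex" where
  "bieval q Z = (\<Sum>(\<alpha>,\<beta>)\<in>Poly_Mapping.keys q. Poly_Mapping.lookup q (\<alpha>,\<beta>) * mval \<alpha> Z * cnj (mval \<beta> Z))"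

definition bihomog :: "bpoly \<Rightarrow> bool" where
  "bihomog q \<longleftrightarrow> (\<exists>d e. \<forall>(\<alpha>,\<beta>)\<in>Poly_Mapping.keys q. mdeg \<alpha> = d \<and> mdeg \<beta> = e)"

definition is_quotient :: "nat \<Rightarrow> nat \<Rightarrow> nat \<Rightarrow> nat \<Rightarrow> (nat \<Rightarrow> cpoly) \<Rightarrow> bpoly \<Rightarrow> bool" where
  "is_quotient a b A B F q \<longleftrightarrow>
     bihomog q \<and> (\<forall>(\<alpha>,\<beta>)\<in>Poly_Mapping.keys q. mon_in_vars (a+b) \<alpha> \<and> mon_in_vars (a+b) \<beta>) \<and>
     (\<forall>Z. complex_of_real (hform B (A+B) (map_val (A+B) F Z))
            = complex_of_real (hform b (a+b) Z) * bieval q Z)"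

definition lin_indep :: "cpoly list \<Rightarrow> bool" where
  "lin_indep L \<longleftrightarrow> (\<forall>c::nat \<Rightarrow> complex.
      (\<Sum>i<length L. const (c i) * L ! i) = 0 \<longrightarrow> (\<forall>i<length L. c i = 0))"

definition hol_decomp :: "nat \<Rightarrow> bpoly \<Rightarrow> cpoly list \<Rightarrow> cpoly list \<Rightarrow> bool" where
  "hol_decomp n q hp hm \<longleftrightarrow>
     (\<exists>d. \<forall>h\<in>set hp. in_vars n h \<and> homog d h) \<and>
     (\<exists>d. \<forall>h\<in>set hm. in_vars n h \<and> homog d h) \<and>
     lin_indep (hp @ hm) \<and>
     (\<forall>Z. bieval q Z = complex_of_real ((\<Sum>h\<leftarrow>hp. (cmod (eval h Z))\<^sup>2) - (\<Sum>h\<leftarrow>hm. (cmod (eval h Z))\<^sup>2)))"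

definition ideal_gen :: "nat \<Rightarrow> cpoly set \<Rightarrow> cpoly set" where
  "ideal_gen n S = {p. \<exists>L. (\<forall>(g,s)\<in>set L. in_vars n g \<and> s \<in> S) \<and> p = (\<Sum>(g,s)\<leftarrow>L. g * s)}"

text \<open>I(H(q)): the ideal generated by the components of a holomorphic decomposition
  (independent of the choice of decomposition).\<close>
definition IH :: "nat \<Rightarrow> bpoly \<Rightarrow> cpoly set" where
  "IH n q = (let (hp, hm) = (SOME (hp, hm). hol_decomp n q hp hm) in ideal_gen n (set hp \<union> set hm))"

definition mono_order :: "nat \<Rightarrow> (mon \<Rightarrow> mon \<Rightarrow> bool) \<Rightarrow> bool" where
  "mono_order n le \<longleftrightarrow>
     (\<forall>\<alpha>. mon_in_vars n \<alpha> \<longrightarrow> le \<alpha> \<alpha>) \<and>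
     (\<forall>\<alpha> \<beta>. mon_in_vars n \<alpha> \<and> mon_in_vars n \<beta> \<and> le \<alpha> \<beta> \<and> le \<beta> \<alpha> \<longrightarrow> \<alpha> = \<beta>) \<and>
     (\<forall>\<alpha> \<beta> \<gamma>. mon_in_vars n \<alpha> \<and> mon_in_vars n \<beta> \<and> mon_in_vars n \<gamma> \<and> le \<alpha> \<beta> \<and> le \<beta> \<gamma> \<longrightarrow> le \<alpha> \<gamma>) \<and>
     (\<forall>\<alpha> \<beta>. mon_in_vars n \<alpha> \<and> mon_in_vars n \<beta> \<longrightarrow> le \<alpha> \<beta> \<or> le \<beta> \<alpha>) \<and>
     (\<forall>\<alpha> \<beta> \<gamma>. mon_in_vars n \<alpha> \<and> mon_in_vars n \<beta> \<and> mon_in_vars n \<gamma> \<and> le \<alpha> \<beta> \<longrightarrow> le (\<alpha> + \<gamma>) (\<beta> + \<gamma>)) \<and>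
     (\<forall>i j. i < j \<and> j \<le> n \<longrightarrow> le (Poly_Mapping.single j 1) (Poly_Mapping.single i 1)
                             \<and> \<not> le (Poly_Mapping.single i 1) (Poly_Mapping.single j 1)) \<and>
     (\<forall>\<alpha> \<beta>. mon_in_vars n \<alpha> \<and> mon_in_vars n \<beta> \<and> mdeg \<alpha> < mdeg \<beta> \<longrightarrow> le \<beta> \<alpha> \<and> \<not> le \<alpha> \<beta>)"

definition init_mon :: "(mon \<Rightarrow> mon \<Rightarrow> bool) \<Rightarrow> cpoly \<Rightarrow> mon" where
  "init_mon le P = (THE \<alpha>. \<alpha> \<in> Poly_Mapping.keys P \<and> (\<forall>\<beta>\<in>Poly_Mapping.keys P. le \<beta> \<alpha>))"

definition init_ideal :: "nat \<Rightarrow> (mon \<Rightarrow> mon \<Rightarrow> bool) \<Rightarrow> cpoly set \<Rightarrow> cpoly set" where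
  "init_ideal n le I = ideal_gen n {monom (init_mon le P) | P. P \<in> I \<and> P \<noteq> 0 \<and> is_homog P}"

text \<open>Linear change of coordinates: (subst n T p)(Z) = p(T Z).\<close>
definition subst :: "nat \<Rightarrow> (nat \<Rightarrow> nat \<Rightarrow> complex) \<Rightarrow> cpoly \<Rightarrow> cpoly" where
  "subst n T p = (\<Sum>\<alpha>\<in>Poly_Mapping.keys p. const (Poly_Mapping.lookup p \<alpha>) *
       (\<Prod>i\<in>Poly_Mapping.keys \<alpha>. (\<Sum>j\<le>n. const (T i j) * Var j) ^ Poly_Mapping.lookup \<alpha> i))"

definition ideal_comp :: "nat \<Rightarrow> cpoly set \<Rightarrow> (nat \<Rightarrow> nat \<Rightarrow> complex) \<Rightarrow> cpoly set" where
  "ideal_comp n I T = subst n T ` I"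

definition dense_open_GL :: "nat \<Rightarrow> (nat \<Rightarrow> nat \<Rightarrow> complex) set \<Rightarrow> bool" where
  "dense_open_GL n U \<longleftrightarrow>
     U \<subseteq> {T. invertible_mat n T} \<and>
     (\<forall>T\<in>U. \<exists>e>0. \<forall>S. invertible_mat n S \<and> (\<forall>i\<le>n. \<forall>j\<le>n. cmod (S i j - T i j) < e) \<longrightarrow> S \<in> U) \<and>
     (\<forall>T. invertible_mat n T \<longrightarrow> (\<forall>e>0. \<exists>S\<in>U. \<forall>i\<le>n. \<forall>j\<le>n. cmod (S i j - T i j) < e))"

text \<open>Generic initial ideal (well defined by Galligo's theorem).\<close>
definition gin :: "nat \<Rightarrow> (mon \<Rightarrow> mon \<Rightarrow> bool) \<Rightarrow> cpoly set \<Rightarrow> cpoly set" where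
  "gin n le I = (SOME J. \<exists>U. dense_open_GL n U \<and> (\<forall>T\<in>U. init_ideal n le (ideal_comp n I T) = J))"

end

theory Submission
  imports Defs "Jordan_Normal_Form.Determinant" "HOL-Computational_Algebra.Polynomial"
begin

text \<open>Since \<tau> and \<chi> rescale the Hermitian forms and F \<circ> \<tau> = \<chi> \<circ> G, the quotients satisfy
  q_G(Z) = \<kappa> q_F(\<tau> Z) for a real \<kappa> \<noteq> 0: first off the null cone of the form, then everywhere by
  continuity. Composing a holomorphic decomposition of q_F with \<tau> and scaling it by sqrt |\<kappa>|
  (swapping h_+ and h_- when \<kappa> < 0) gives one of q_G, so I(H(q_G)) = I(H(q_F)) \<circ> \<tau>. The ideal does
  not depend on the decomposition: polarizing the identity between two decompositions and inverting
  a positive definite Gram matrix shows that their components span the same space. Finally gin is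
  unchanged when an ideal is composed with an invertible linear map, because left multiplication
  by that map carries dense open subsets of GL onto dense open subsets.\<close>

section \<open>Evaluation of polynomials\<close>

lemma mval_eq_prod_superset:
  assumes "finite S" "Poly_Mapping.keys \<alpha> \<subseteq> S"
  shows "mval \<alpha> Z = (\<Prod>i\<in>S. Z i ^ Poly_Mapping.lookup \<alpha> i)"
  unfolding mval_def
  by (rule prod.mono_neutral_left[OF assms]) (auto simp: in_keys_iff)

lemma mval_zero [simp]: "mval 0 Z = 1"
  by (simp add: mval_def)

lemma mval_add: "mval (\<alpha> + \<beta>) Z = mval \<alpha> Z * mval \<beta> Z"
proof -
  let ?S = "Poly_Mapping.keys \<alpha> \<union> Poly_Mapping.keys \<beta>"
  have "mval (\<alpha> + \<beta>) Z = (\<Prod>i\<in>?S. Z i ^ Poly_Mapping.lookup (\<alpha>+\<beta>) i)"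
    by (rule mval_eq_prod_superset) (auto dest: set_mp[OF keys_add])
  also have "\<dots> = (\<Prod>i\<in>?S. Z i ^ Poly_Mapping.lookup \<alpha> i * Z i ^ Poly_Mapping.lookup \<beta> i)"
    by (simp add: lookup_add power_add)
  also have "\<dots> = mval \<alpha> Z * mval \<beta> Z"
    by (simp add: prod.distrib mval_eq_prod_superset[of ?S])
  finally show ?thesis .
qed

lemma eval_eq_sum_superset:
  assumes "finite K" "Poly_Mapping.keys p \<subseteq> K"
  shows "eval p Z = (\<Sum>\<alpha>\<in>K. Poly_Mapping.lookup p \<alpha> * mval \<alpha> Z)"
  unfolding eval_def
  by (rule sum.mono_neutral_left[OF assms]) (auto simp: in_keys_iff)

lemma eval_zero [simp]: "eval 0 Z = 0"
  by (simp add: eval_def)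

lemma eval_add [simp]: "eval (p + q) Z = eval p Z + eval q Z"
proof -
  let ?K = "Poly_Mapping.keys p \<union> Poly_Mapping.keys q"
  have "eval (p+q) Z = (\<Sum>\<alpha>\<in>?K. Poly_Mapping.lookup (p+q) \<alpha> * mval \<alpha> Z)"
    by (rule eval_eq_sum_superset) (auto dest: set_mp[OF keys_add])
  also have "\<dots> = eval p Z + eval q Z"
    by (simp add: lookup_add distrib_right sum.distrib eval_eq_sum_superset[of ?K])
  finally show ?thesis .
qed

lemma eval_uminus [simp]: "eval (- p) Z = - eval p Z"
  by (simp add: eval_def sum_negf)

lemma eval_diff [simp]: "eval (p - q) Z = eval p Z - eval q Z"
  using eval_add[of p "-q" Z] by simp

lemma eval_sum [simp]: "eval (\<Sum>x\<in>A. f x) Z = (\<Sum>x\<in>A. eval (f x) Z)"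
  by (induction A rule: infinite_finite_induct) auto

lemma eval_single [simp]: "eval (Poly_Mapping.single \<alpha> c) Z = c * mval \<alpha> Z"
  by (simp add: eval_def)

lemma cpoly_sum_single_lookup: "p = (\<Sum>\<alpha>\<in>Poly_Mapping.keys p. Poly_Mapping.single \<alpha> (Poly_Mapping.lookup p \<alpha>))"
proof (rule poly_mapping_eqI)
  fix k
  have "Poly_Mapping.lookup (\<Sum>\<alpha>\<in>Poly_Mapping.keys p. Poly_Mapping.single \<alpha> (Poly_Mapping.lookup p \<alpha>)) k
     = (\<Sum>\<alpha>\<in>Poly_Mapping.keys p. (if \<alpha> = k then Poly_Mapping.lookup p \<alpha> else 0))"
    by (simp add: lookup_sum lookup_single when_def)
  also have "\<dots> = Poly_Mapping.lookup p k"
    by (auto simp: in_keys_iff)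
  finally show "Poly_Mapping.lookup p k = Poly_Mapping.lookup (\<Sum>\<alpha>\<in>Poly_Mapping.keys p. Poly_Mapping.single \<alpha> (Poly_Mapping.lookup p \<alpha>)) k"
    by simp
qed

lemma eval_mult [simp]: "eval (p * q) Z = eval p Z * eval (q::cpoly) Z"
proof -
  have "p * q = (\<Sum>\<alpha>\<in>Poly_Mapping.keys p. Poly_Mapping.single \<alpha> (Poly_Mapping.lookup p \<alpha>)) *
                (\<Sum>\<beta>\<in>Poly_Mapping.keys q. Poly_Mapping.single \<beta> (Poly_Mapping.lookup q \<beta>))"
    by (subst cpoly_sum_single_lookup[of p], subst cpoly_sum_single_lookup[of q]) (rule refl)
  also have "\<dots> = (\<Sum>\<alpha>\<in>Poly_Mapping.keys p. \<Sum>\<beta>\<in>Poly_Mapping.keys q.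
        Poly_Mapping.single (\<alpha>+\<beta>) (Poly_Mapping.lookup p \<alpha> * Poly_Mapping.lookup q \<beta>))"
    by (simp add: sum_distrib_left sum_distrib_right mult_single) (rule sum.swap)
  finally have "eval (p*q) Z = (\<Sum>\<alpha>\<in>Poly_Mapping.keys p. \<Sum>\<beta>\<in>Poly_Mapping.keys q.
        Poly_Mapping.lookup p \<alpha> * Poly_Mapping.lookup q \<beta> * (mval \<alpha> Z * mval \<beta> Z))"
    by (simp add: mval_add)
  also have "\<dots> = eval p Z * eval q Z"
    unfolding eval_def sum_distrib_right by (subst sum_distrib_left) (simp add: sum_distrib_left mult_ac)
  finally show ?thesis .
qed

lemma eval_one [simp]: "eval 1 Z = 1"
proof -
  have "(1::cpoly) = Poly_Mapping.single 0 1" by simp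
  then show ?thesis by (metis eval_single mval_zero mult_1)
qed

lemma eval_power [simp]: "eval (p ^ k) Z = eval p Z ^ k"
  by (induction k) auto

lemma eval_prod [simp]: "eval (\<Prod>x\<in>A. f x) Z = (\<Prod>x\<in>A. eval (f x) Z)"
  by (induction A rule: infinite_finite_induct) auto

lemma eval_const [simp]: "eval (const c) Z = c"
  by (simp add: const_def)

lemma eval_Var [simp]: "eval (Var j) Z = Z j"
  unfolding Var_def eval_single by (simp add: mval_def)

lemma lookup_const_mult [simp]:
  "Poly_Mapping.lookup (const c * p) \<alpha> = c * Poly_Mapping.lookup p \<alpha>"
proof -
  have "const c * p = Poly_Mapping.map ((*) c) p"
    by (simp add: const_def mult_map_scale_conv_mult)
  then show ?thesis by (simp add: map.rep_eq when_def)
qed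

lemma eval_lin_comb [simp]: "eval (\<Sum>i\<in>A. const (c i) * f i) Z = (\<Sum>i\<in>A. c i * eval (f i) Z)"
  by simp

lemma lookup_lin_comb [simp]: "Poly_Mapping.lookup (\<Sum>i\<in>A. const (c i) * f i) \<beta> = (\<Sum>i\<in>A. c i * Poly_Mapping.lookup (f i) \<beta>)"
  by (simp add: lookup_sum)

lemma sum_list_map_pair: "(\<Sum>(g,s)\<leftarrow>map (\<lambda>(a,h). (F a, G h)) L. g * s) = (\<Sum>(a,h)\<leftarrow>L. F a * G h)"
  by (induction L) auto

lemma eval_sum_list_mult: "eval (\<Sum>(a,h)\<leftarrow>L. F a * G h) Z = (\<Sum>(a,h)\<leftarrow>L. eval (F a) Z * eval (G h) Z)"
  by (induction L) auto

lemma sum_list_pair_cong: "(\<And>a h. (a, h) \<in> set L \<Longrightarrow> f a h = g a h) \<Longrightarrow> (\<Sum>(a,h)\<leftarrow>L. f a h) = (\<Sum>(a,h)\<leftarrow>L. (g a h :: complex))"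
  by (induction L) auto

lemma base_digits_inj:
  fixes f g :: "nat \<Rightarrow> nat"
  assumes "\<forall>i<N. f i < D" "\<forall>i<N. g i < D" "(\<Sum>i<N. f i * D^i) = (\<Sum>i<N. g i * D^i)"
  shows "\<forall>i<N. f i = g i"
  using assms
proof (induction N arbitrary: f g)
  case 0 then show ?case by simp
next
  case (Suc N)
  have ef: "(\<Sum>i<Suc N. f i * D^i) = f 0 + D * (\<Sum>i<N. f (Suc i) * D^i)" for f :: "nat \<Rightarrow> nat"
    unfolding sum.lessThan_Suc_shift by (simp add: sum_distrib_left mult.left_commute)
  have f0: "f 0 < D" "g 0 < D" using Suc.prems(1,2) by auto
  have eq: "f 0 + D * (\<Sum>i<N. f (Suc i) * D^i) = g 0 + D * (\<Sum>i<N. g (Suc i) * D^i)"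
    using Suc.prems(3) unfolding ef .
  have m: "(a + D * x) mod D = a" "(a + D * x) div D = x" if "a < D" for a x :: nat
    using that by auto
  have h0: "f 0 = g 0" using m(1)[OF f0(1)] m(1)[OF f0(2)] eq by metis
  have "(\<Sum>i<N. f (Suc i) * D^i) = (\<Sum>i<N. g (Suc i) * D^i)"
    using m(2)[OF f0(1)] m(2)[OF f0(2)] eq by metis
  moreover have "\<forall>i<N. f (Suc i) < D" "\<forall>i<N. g (Suc i) < D" using Suc.prems(1,2) by auto
  ultimately have "\<forall>i<N. f (Suc i) = g (Suc i)"
    using Suc.IH[of "\<lambda>i. f (Suc i)" "\<lambda>i. g (Suc i)"] by blast
  then show ?case using h0 by (auto simp: less_Suc_eq_0_disj)
qed

lemma mval_kronecker:
  assumes "Poly_Mapping.keys \<alpha> \<subseteq> {..<N}"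
  shows "mval \<alpha> (\<lambda>i. t ^ (D ^ i)) = t ^ (\<Sum>i<N. Poly_Mapping.lookup \<alpha> i * D ^ i)"
proof -
  have "mval \<alpha> (\<lambda>i. t ^ (D ^ i)) = (\<Prod>i<N. (t ^ (D ^ i)) ^ Poly_Mapping.lookup \<alpha> i)"
    by (rule mval_eq_prod_superset) (use assms in auto)
  also have "\<dots> = t ^ (\<Sum>i<N. Poly_Mapping.lookup \<alpha> i * D ^ i)"
    by (simp add: power_mult[symmetric] mult.commute power_sum)
  finally show ?thesis .
qed

lemma kronecker_exponent_inj_on:
  fixes K :: "mon set"
  assumes finK: "finite K"
  obtains N D where "\<And>\<alpha>. \<alpha> \<in> K \<Longrightarrow> Poly_Mapping.keys \<alpha> \<subseteq> {..<N}"
    and "inj_on (\<lambda>\<alpha>. \<Sum>i<N. Poly_Mapping.lookup \<alpha> i * D ^ i) K"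
proof -
  define D where "D = 2 + (\<Sum>\<alpha>\<in>K. \<Sum>i\<in>Poly_Mapping.keys \<alpha>. Poly_Mapping.lookup \<alpha> i)"
  define N where "N = Suc (\<Sum>\<alpha>\<in>K. \<Sum>i\<in>Poly_Mapping.keys \<alpha>. i)"
  have digit: "Poly_Mapping.lookup \<alpha> i < D" if "\<alpha> \<in> K" for \<alpha> i
  proof (cases "i \<in> Poly_Mapping.keys \<alpha>")
    case True
    have "Poly_Mapping.lookup \<alpha> i \<le> (\<Sum>i\<in>Poly_Mapping.keys \<alpha>. Poly_Mapping.lookup \<alpha> i)"
      by (rule member_le_sum[OF True]) auto
    also have "\<dots> \<le> (\<Sum>\<alpha>\<in>K. \<Sum>i\<in>Poly_Mapping.keys \<alpha>. Poly_Mapping.lookup \<alpha> i)"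
      by (rule member_le_sum[OF that]) (auto simp: finK)
    finally show ?thesis by (simp add: D_def)
  qed (simp add: D_def in_keys_iff)
  have keys: "Poly_Mapping.keys \<alpha> \<subseteq> {..<N}" if "\<alpha> \<in> K" for \<alpha>
  proof
    fix i assume i: "i \<in> Poly_Mapping.keys \<alpha>"
    have "i \<le> (\<Sum>i\<in>Poly_Mapping.keys \<alpha>. i)"
      by (rule member_le_sum[OF i]) auto
    also have "\<dots> \<le> (\<Sum>\<alpha>\<in>K. \<Sum>i\<in>Poly_Mapping.keys \<alpha>. i)"
      by (rule member_le_sum[OF that]) (auto simp: finK)
    finally show "i \<in> {..<N}" by (simp add: N_def)
  qed
  have "inj_on (\<lambda>\<alpha>. \<Sum>i<N. Poly_Mapping.lookup \<alpha> i * D ^ i) K"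
  proof (rule inj_onI, rule poly_mapping_eqI)
    fix \<alpha> \<beta> i assume \<alpha>\<beta>: "\<alpha> \<in> K" "\<beta> \<in> K"
      and e: "(\<Sum>i<N. Poly_Mapping.lookup \<alpha> i * D ^ i) = (\<Sum>i<N. Poly_Mapping.lookup \<beta> i * D ^ i)"
    have "\<forall>i<N. Poly_Mapping.lookup \<alpha> i = Poly_Mapping.lookup \<beta> i"
      using base_digits_inj[OF _ _ e] digit \<alpha>\<beta> by blast
    moreover have "Poly_Mapping.lookup \<alpha> i = 0 \<and> Poly_Mapping.lookup \<beta> i = 0" if "\<not> i < N"
      using keys[OF \<alpha>\<beta>(1)] keys[OF \<alpha>\<beta>(2)] that by (auto simp: in_keys_iff)
    ultimately show "Poly_Mapping.lookup \<alpha> i = Poly_Mapping.lookup \<beta> i" by (cases "i < N") auto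
  qed
  with keys show ?thesis using that by blast
qed

lemma cpoly_eq_0_if_eval_eq_0:
  assumes "\<And>Z. eval p Z = 0"
  shows "p = 0"
proof (rule ccontr)
  assume "p \<noteq> 0"
  define K where "K = Poly_Mapping.keys p"
  obtain \<alpha>0 where a0: "\<alpha>0 \<in> K" using \<open>p \<noteq> 0\<close> by (metis K_def ex_in_conv keys_eq_empty)
  obtain N D where keys: "\<And>\<alpha>. \<alpha> \<in> K \<Longrightarrow> Poly_Mapping.keys \<alpha> \<subseteq> {..<N}"
    and inj: "inj_on (\<lambda>\<alpha>. \<Sum>i<N. Poly_Mapping.lookup \<alpha> i * D ^ i) K"
    using kronecker_exponent_inj_on[of K] by (auto simp: K_def)
  define e where "e \<alpha> = (\<Sum>i<N. Poly_Mapping.lookup \<alpha> i * D ^ i)" for \<alpha>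
  \<comment> \<open>On the curve Z i = t ^ (D ^ i) the polynomial p becomes a univariate polynomial P
      whose coefficients are those of p, because distinct monomials get distinct degrees.\<close>
  define P where "P = (\<Sum>\<alpha>\<in>K. Polynomial.monom (Poly_Mapping.lookup p \<alpha>) (e \<alpha>))"
  have "poly P t = eval p (\<lambda>i. t ^ (D ^ i))" for t
    unfolding eval_def K_def[symmetric] P_def poly_sum
    by (rule sum.cong) (auto simp: poly_monom e_def mval_kronecker[OF keys])
  then have "P = 0" using assms poly_all_0_iff_0 by auto
  then have "0 = coeff P (e \<alpha>0)" by simp
  also have "\<dots> = (\<Sum>\<alpha>\<in>K. if \<alpha> = \<alpha>0 then Poly_Mapping.lookup p \<alpha> else 0)"
    unfolding P_def coeff_sum using inj a0 by (intro sum.cong) (auto simp: e_def inj_on_def)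
  also have "\<dots> = Poly_Mapping.lookup p \<alpha>0" using a0 by (simp add: K_def)
  finally show False using a0 by (simp add: K_def in_keys_iff)
qed

lemma cpoly_eqI_eval:
  assumes "\<And>Z. eval p Z = eval q Z"
  shows "p = q"
  using cpoly_eq_0_if_eval_eq_0[of "p - q"] assms by simp

section \<open>Variables, homogeneity and generated ideals\<close>

lemma keys_mult_imp_add: "\<gamma> \<in> Poly_Mapping.keys (p * q) \<Longrightarrow> \<exists>\<alpha>\<in>Poly_Mapping.keys p. \<exists>\<beta>\<in>Poly_Mapping.keys q. \<gamma> = \<alpha> + \<beta>"
  using keys_mult[of p q] by blast

lemma keys_add_mon: "Poly_Mapping.keys ((\<alpha>::mon) + \<beta>) = Poly_Mapping.keys \<alpha> \<union> Poly_Mapping.keys \<beta>"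
  by (auto simp: in_keys_iff lookup_add)

lemma mdeg_add: "mdeg (\<alpha> + \<beta>) = mdeg \<alpha> + mdeg \<beta>"
proof -
  let ?S = "Poly_Mapping.keys \<alpha> \<union> Poly_Mapping.keys \<beta>"
  have s: "mdeg \<gamma> = (\<Sum>i\<in>?S. Poly_Mapping.lookup \<gamma> i)" if "Poly_Mapping.keys \<gamma> \<subseteq> ?S" for \<gamma>
    unfolding mdeg_def by (rule sum.mono_neutral_left) (use that in \<open>auto simp: in_keys_iff\<close>)
  show ?thesis
    by (subst (1 2 3) s) (auto simp: keys_add_mon lookup_add sum.distrib)
qed

lemma mdeg_zero [simp]: "mdeg 0 = 0" by (simp add: mdeg_def)

lemma mdeg_single [simp]: "mdeg (Poly_Mapping.single j k) = k" by (simp add: mdeg_def)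

lemma in_vars_zero [simp]: "in_vars n 0" by (simp add: in_vars_def)

lemma in_vars_add: "in_vars n p \<Longrightarrow> in_vars n q \<Longrightarrow> in_vars n (p + q)"
  unfolding in_vars_def using keys_add[of p q] by blast

lemma in_vars_mult: "in_vars n p \<Longrightarrow> in_vars n q \<Longrightarrow> in_vars n (p * q)"
  unfolding in_vars_def mon_in_vars_def
proof
  fix \<gamma> assume "\<forall>\<alpha>\<in>Poly_Mapping.keys p. Poly_Mapping.keys \<alpha> \<subseteq> {..n}"
    "\<forall>\<alpha>\<in>Poly_Mapping.keys q. Poly_Mapping.keys \<alpha> \<subseteq> {..n}" "\<gamma> \<in> Poly_Mapping.keys (p * q)"
  then show "Poly_Mapping.keys \<gamma> \<subseteq> {..n}"
    using keys_mult_imp_add[of \<gamma> p q] keys_add_mon by blast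
qed

lemma in_vars_const [simp]: "in_vars n (const c)"
  by (simp add: const_def in_vars_def mon_in_vars_def)

lemma in_vars_Var: "j \<le> n \<Longrightarrow> in_vars n (Var j)"
  by (simp add: Var_def in_vars_def mon_in_vars_def)

lemma in_vars_one [simp]: "in_vars n 1"
  by (simp add: in_vars_def mon_in_vars_def)

lemma in_vars_sum: "(\<And>x. x \<in> A \<Longrightarrow> in_vars n (f x)) \<Longrightarrow> in_vars n (\<Sum>x\<in>A. f x)"
  by (induction A rule: infinite_finite_induct) (auto intro: in_vars_add)

lemma in_vars_prod: "(\<And>x. x \<in> A \<Longrightarrow> in_vars n (f x)) \<Longrightarrow> in_vars n (\<Prod>x\<in>A. f x)"
  by (induction A rule: infinite_finite_induct) (auto intro: in_vars_mult)

lemma in_vars_power: "in_vars n p \<Longrightarrow> in_vars n (p ^ k)"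
  by (induction k) (auto intro: in_vars_mult)

lemma homog_zero [simp]: "homog d 0" by (simp add: homog_def)

lemma homog_add: "homog d p \<Longrightarrow> homog d q \<Longrightarrow> homog d (p + q)"
  unfolding homog_def using keys_add[of p q] by blast

lemma homog_mult: "homog d p \<Longrightarrow> homog e q \<Longrightarrow> homog (d + e) (p * q)"
  unfolding homog_def by (auto dest!: keys_mult_imp_add simp: mdeg_add)

lemma homog_const [simp]: "homog 0 (const c)"
  by (simp add: const_def homog_def)

lemma homog_one [simp]: "homog 0 1"
  by (simp add: homog_def)

lemma homog_Var [simp]: "homog 1 (Var j)"
  by (simp add: Var_def homog_def del: One_nat_def)

lemma homog_sum: "(\<And>x. x \<in> A \<Longrightarrow> homog d (f x)) \<Longrightarrow> homog d (\<Sum>x\<in>A. f x)"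
  by (induction A rule: infinite_finite_induct) (auto intro: homog_add)

lemma homog_power: "homog d p \<Longrightarrow> homog (k * d) (p ^ k)"
  by (induction k) (auto dest: homog_mult)

lemma homog_prod: "(\<And>x. x \<in> A \<Longrightarrow> homog (f x) (g x)) \<Longrightarrow> homog (\<Sum>x\<in>A. f x) (\<Prod>x\<in>A. g x)"
  by (induction A rule: infinite_finite_induct) (auto dest: homog_mult)

lemma homog_lin: "homog 1 (\<Sum>j\<le>n. const (T i j) * Var j)"
  by (rule homog_sum) (metis add_0 homog_Var homog_const homog_mult)

lemma ideal_gen_zero: "0 \<in> ideal_gen n S"
  unfolding ideal_gen_def by (rule CollectI, rule exI[of _ "[]"]) simp

lemma ideal_gen_add: "p \<in> ideal_gen n S \<Longrightarrow> q \<in> ideal_gen n S \<Longrightarrow> p + q \<in> ideal_gen n S"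
  unfolding ideal_gen_def
proof (clarify)
  fix L L' assume "\<forall>(g, s)\<in>set L. in_vars n g \<and> s \<in> S" "\<forall>(g, s)\<in>set L'. in_vars n g \<and> s \<in> S"
  then show "\<exists>L''. (\<forall>(g, s)\<in>set L''. in_vars n g \<and> s \<in> S) \<and>
     (\<Sum>(g, s)\<leftarrow>L. g * s) + (\<Sum>(g, s)\<leftarrow>L'. g * s) = (\<Sum>(g, s)\<leftarrow>L''. g * s)"
    by (intro exI[of _ "L @ L'"]) auto
qed

lemma sum_list_mult_left: "g * (\<Sum>(a, s)\<leftarrow>L. a * s) = (\<Sum>(a, s)\<leftarrow>map (\<lambda>(a,s). (g * a, s)) L. a * (s::cpoly))"
  by (induction L) (auto simp: algebra_simps)

lemma ideal_gen_mult: "in_vars n g \<Longrightarrow> p \<in> ideal_gen n S \<Longrightarrow> g * p \<in> ideal_gen n S"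
  unfolding ideal_gen_def
proof (clarify)
  fix L assume g: "in_vars n g" and L: "\<forall>(a, s)\<in>set L. in_vars n a \<and> s \<in> S"
  show "\<exists>L''. (\<forall>(a, s)\<in>set L''. in_vars n a \<and> s \<in> S) \<and> g * (\<Sum>(a, s)\<leftarrow>L. a * s) = (\<Sum>(a, s)\<leftarrow>L''. a * s)"
    by (intro exI[of _ "map (\<lambda>(a,s). (g * a, s)) L"] conjI sum_list_mult_left)
       (use g L in \<open>auto intro: in_vars_mult\<close>)
qed

lemma ideal_gen_gen: "s \<in> S \<Longrightarrow> s \<in> ideal_gen n S"
  unfolding ideal_gen_def by (rule CollectI, rule exI[of _ "[(1, s)]"]) simp

lemma ideal_gen_sum: "(\<And>x. x \<in> A \<Longrightarrow> f x \<in> ideal_gen n S) \<Longrightarrow> (\<Sum>x\<in>A. f x) \<in> ideal_gen n S"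
  by (induction A rule: infinite_finite_induct) (auto intro: ideal_gen_add ideal_gen_zero)

lemma ideal_gen_mono:
  assumes "S \<subseteq> ideal_gen n S'"
  shows "ideal_gen n S \<subseteq> ideal_gen n S'"
proof
  fix p assume "p \<in> ideal_gen n S"
  then obtain L where L: "\<forall>(g, s)\<in>set L. in_vars n g \<and> s \<in> S" and p: "p = (\<Sum>(g, s)\<leftarrow>L. g * s)"
    by (auto simp: ideal_gen_def)
  have "(\<Sum>(g, s)\<leftarrow>L. g * s) \<in> ideal_gen n S'"
    using L
  proof (induction L)
    case Nil then show ?case by (simp add: ideal_gen_zero)
  next
    case (Cons x L)
    obtain g s where x: "x = (g, s)" by (cases x)
    have "g * s \<in> ideal_gen n S'" using Cons.prems assms x by (auto intro: ideal_gen_mult)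
    then show ?case using Cons x by (auto intro: ideal_gen_add)
  qed
  then show "p \<in> ideal_gen n S'" using p by simp
qed

section \<open>Matrices and linear substitutions\<close>

definition mat_mult :: "nat \<Rightarrow> (nat \<Rightarrow> nat \<Rightarrow> complex) \<Rightarrow> (nat \<Rightarrow> nat \<Rightarrow> complex) \<Rightarrow> (nat \<Rightarrow> nat \<Rightarrow> complex)" where
  "mat_mult n A B = (\<lambda>i j. if i \<le> n \<and> j \<le> n then (\<Sum>k\<le>n. A i k * B k j) else 0)"

definition trunc_vec :: "nat \<Rightarrow> (nat \<Rightarrow> complex) \<Rightarrow> (nat \<Rightarrow> complex)" where
  "trunc_vec n W = (\<lambda>i. if i \<le> n then W i else 0)"

definition mat_left_inv :: "nat \<Rightarrow> (nat \<Rightarrow> nat \<Rightarrow> complex) \<Rightarrow> (nat \<Rightarrow> nat \<Rightarrow> complex) \<Rightarrow> bool" where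
  "mat_left_inv n S T \<longleftrightarrow> (\<forall>i\<le>n. \<forall>k\<le>n. (\<Sum>j\<le>n. S i j * T j k) = (if i = k then 1 else 0))"

definition mat_id :: "nat \<Rightarrow> nat \<Rightarrow> nat \<Rightarrow> complex" where
  "mat_id n = (\<lambda>i j. if i = j \<and> i \<le> n then 1 else 0)"

lemma is_mat_mat_mult [simp]: "is_mat n (mat_mult n A B)"
  by (simp add: is_mat_def mat_mult_def)

lemma mat_left_inv_iff: "mat_left_inv n A B \<longleftrightarrow> mat_mult n A B = mat_id n"
  unfolding mat_left_inv_def mat_mult_def mat_id_def fun_eq_iff by auto

lemma mat_mult_assoc: "mat_mult n A (mat_mult n B C) = mat_mult n (mat_mult n A B) C"
proof (intro ext)
  fix i j
  show "mat_mult n A (mat_mult n B C) i j = mat_mult n (mat_mult n A B) C i j"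
  proof (cases "i \<le> n \<and> j \<le> n")
    case True
    have "(\<Sum>k\<le>n. A i k * (\<Sum>l\<le>n. B k l * C l j)) = (\<Sum>k\<le>n. \<Sum>l\<le>n. A i k * B k l * C l j)"
      by (simp add: sum_distrib_left mult.assoc)
    also have "\<dots> = (\<Sum>l\<le>n. \<Sum>k\<le>n. A i k * B k l * C l j)" by (rule sum.swap)
    also have "\<dots> = (\<Sum>l\<le>n. (\<Sum>k\<le>n. A i k * B k l) * C l j)" by (simp add: sum_distrib_right)
    moreover have "mat_mult n A (mat_mult n B C) i j = (\<Sum>k\<le>n. A i k * (\<Sum>l\<le>n. B k l * C l j))"
      using True by (auto simp: mat_mult_def intro!: sum.cong)
    moreover have "mat_mult n (mat_mult n A B) C i j = (\<Sum>l\<le>n. (\<Sum>k\<le>n. A i k * B k l) * C l j)"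
      using True by (auto simp: mat_mult_def intro!: sum.cong)
    ultimately show ?thesis by simp
  qed (auto simp: mat_mult_def)
qed

lemma mat_mult_id_left: "is_mat n T \<Longrightarrow> mat_mult n (mat_id n) T = T"
  unfolding mat_mult_def mat_id_def is_mat_def fun_eq_iff
  by (auto simp: if_distrib[of "\<lambda>x. x * _"] cong: if_cong)

lemma invertible_mat_iff: "Defs.invertible_mat n T \<longleftrightarrow> is_mat n T \<and> (\<exists>S. mat_mult n S T = mat_id n)"
  unfolding Defs.invertible_mat_def mat_left_inv_iff[symmetric] mat_left_inv_def by simp

lemma mat_app_mat_mult: "mat_app n A (mat_app n B Z) = mat_app n (mat_mult n A B) Z"
proof
  fix i
  show "mat_app n A (mat_app n B Z) i = mat_app n (mat_mult n A B) Z i"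
  proof (cases "i \<le> n")
    case True
    have "(\<Sum>k\<le>n. A i k * (\<Sum>j\<le>n. B k j * Z j)) = (\<Sum>k\<le>n. \<Sum>j\<le>n. A i k * B k j * Z j)"
      by (simp add: sum_distrib_left mult.assoc)
    also have "\<dots> = (\<Sum>j\<le>n. \<Sum>k\<le>n. A i k * B k j * Z j)" by (rule sum.swap)
    also have "\<dots> = (\<Sum>j\<le>n. (\<Sum>k\<le>n. A i k * B k j) * Z j)" by (simp add: sum_distrib_right)
    moreover have "mat_app n A (mat_app n B Z) i = (\<Sum>k\<le>n. A i k * (\<Sum>j\<le>n. B k j * Z j))"
      using True by (auto simp: mat_app_def intro!: sum.cong)
    moreover have "mat_app n (mat_mult n A B) Z i = (\<Sum>j\<le>n. (\<Sum>k\<le>n. A i k * B k j) * Z j)"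
      using True by (auto simp: mat_app_def mat_mult_def intro!: sum.cong)
    ultimately show ?thesis by simp
  qed (simp add: mat_app_def)
qed

lemma mat_app_left_inv:
  assumes "mat_left_inv n A B"
  shows "mat_app n A (mat_app n B Z) = trunc_vec n Z"
proof
  fix i
  show "mat_app n A (mat_app n B Z) i = trunc_vec n Z i"
  proof (cases "i \<le> n")
    case True
    have "mat_app n A (mat_app n B Z) i = mat_app n (mat_mult n A B) Z i" by (rule mat_app_mat_mult[THEN fun_cong])
    also have "\<dots> = (\<Sum>j\<le>n. (\<Sum>k\<le>n. A i k * B k j) * Z j)"
      using True by (auto simp: mat_app_def mat_mult_def intro!: sum.cong)
    also have "\<dots> = (\<Sum>j\<le>n. (if i = j then Z j else 0))"
      using assms True by (intro sum.cong) (auto simp: mat_left_inv_def)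
    also have "\<dots> = trunc_vec n Z i" using True by (simp add: trunc_vec_def)
    finally show ?thesis .
  qed (simp add: mat_app_def trunc_vec_def)
qed

lemma mval_trunc_vec:
  assumes "mon_in_vars n \<alpha>" shows "mval \<alpha> (trunc_vec n W) = mval \<alpha> W"
  using assms unfolding mval_def mon_in_vars_def
  by (intro prod.cong) (auto simp: trunc_vec_def)

lemma eval_trunc_vec:
  assumes "in_vars n p" shows "eval p (trunc_vec n W) = eval p W"
  using assms unfolding eval_def in_vars_def
  by (intro sum.cong) (auto simp: mval_trunc_vec)

lemma bieval_trunc_vec:
  assumes "\<forall>(\<alpha>,\<beta>)\<in>Poly_Mapping.keys q. mon_in_vars n \<alpha> \<and> mon_in_vars n \<beta>"
  shows "bieval q (trunc_vec n W) = bieval q W"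
  unfolding bieval_def using assms by (intro sum.cong) (auto simp: mval_trunc_vec)

lemma mat_prod_entry:
  assumes "i < m" "j < m"
  shows "(mat m m (\<lambda>(i,j). f i j) * mat m m (\<lambda>(i,j). g i j)) $$ (i,j) = (\<Sum>k<m. f i k * g k j)"
  using assms by (simp add: scalar_prod_def row_def col_def atLeast0LessThan)

lemma left_inverse_if_injective:
  fixes G :: "nat \<Rightarrow> nat \<Rightarrow> complex"
  assumes inj: "\<And>x. (\<forall>l<m. (\<Sum>r<m. G l r * x r) = 0) \<Longrightarrow> (\<forall>r<m. x r = 0)"
  shows "\<exists>M. \<forall>i<m. \<forall>r<m. (\<Sum>l<m. M i l * G l r) = (if i = r then 1 else 0)"
proof -
  define A where "A = mat m m (\<lambda>(i,j). G i j)"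
  have A: "A \<in> carrier_mat m m" by (simp add: A_def)
  have "det A \<noteq> 0"
  proof
    assume "det A = 0"
    then obtain v where v: "v \<in> carrier_vec m" "v \<noteq> 0\<^sub>v m" "A *\<^sub>v v = 0\<^sub>v m"
      using det_0_iff_vec_prod_zero_field[OF A] by blast
    have "\<forall>l<m. (\<Sum>r<m. G l r * v $ r) = 0"
    proof (intro allI impI)
      fix l assume l: "l < m"
      have "(A *\<^sub>v v) $ l = 0" using v(3) l by simp
      then show "(\<Sum>r<m. G l r * v $ r) = 0"
        using l v(1) by (simp add: A_def scalar_prod_def row_def atLeast0LessThan)
    qed
    then have "\<forall>r<m. v $ r = 0" using inj by blast
    then have "v = 0\<^sub>v m" using v(1) by (intro eq_vecI) auto
    then show False using v(2) by simp
  qed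
  define M where "M i l = adj_mat A $$ (i,l) / det A" for i l
  have adjA: "adj_mat A \<in> carrier_mat m m" using adj_mat(1)[OF A] .
  have e1: "(adj_mat A * A) $$ (i,r) = det A * (if i = r then 1 else 0)" if "i < m" "r < m" for i r
    using adj_mat(3)[OF A] that by simp
  show ?thesis
  proof (intro exI allI impI)
    fix i r assume ir: "i < m" "r < m"
    have "(adj_mat A * A) $$ (i,r) = (\<Sum>l<m. adj_mat A $$ (i,l) * G l r)"
      using ir adjA by (simp add: A_def scalar_prod_def row_def col_def atLeast0LessThan)
    then have "(\<Sum>l<m. adj_mat A $$ (i,l) * G l r) = det A * (if i = r then 1 else 0)"
      using e1[OF ir] by simp
    then show "(\<Sum>l<m. M i l * G l r) = (if i = r then 1 else 0)"
      using \<open>det A \<noteq> 0\<close> by (simp add: M_def sum_divide_distrib[symmetric])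
  qed
qed

lemma mat_left_inv_imp_right_inv:
  assumes "mat_left_inv n S T"
  shows "mat_left_inv n T S"
proof -
  let ?m = "Suc n"
  define A where "A = mat ?m ?m (\<lambda>(i,j). S i j)"
  define B where "B = mat ?m ?m (\<lambda>(i,j). T i j)"
  have AB: "A * B = 1\<^sub>m ?m"
  proof (rule eq_matI)
    fix i j assume "i < dim_row (1\<^sub>m ?m)" "j < dim_col (1\<^sub>m ?m)"
    then have ij: "i < ?m" "j < ?m" by auto
    have "(A * B) $$ (i,j) = (\<Sum>k<?m. S i k * T k j)"
      unfolding A_def B_def by (rule mat_prod_entry[OF ij])
    also have "\<dots> = (if i = j then 1 else 0)"
      using assms ij by (simp add: mat_left_inv_def lessThan_Suc_atMost)
    finally show "(A * B) $$ (i,j) = 1\<^sub>m ?m $$ (i,j)" using ij by simp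
  qed (auto simp: A_def B_def)
  have BA: "B * A = 1\<^sub>m ?m"
    by (rule mat_mult_left_right_inverse[OF _ _ AB]) (auto simp: A_def B_def)
  show ?thesis unfolding mat_left_inv_def
  proof (intro allI impI)
    fix i k assume ik: "i \<le> n" "k \<le> n"
    then have ik': "i < ?m" "k < ?m" by auto
    have "(B * A) $$ (i,k) = (\<Sum>j<?m. T i j * S j k)"
      unfolding A_def B_def by (rule mat_prod_entry[OF ik'])
    then show "(\<Sum>j\<le>n. T i j * S j k) = (if i = k then 1 else 0)"
      using BA ik' by (simp add: lessThan_Suc_atMost)
  qed
qed

lemma eval_subst:
  assumes "is_mat n T"
  shows "eval (subst n T p) Z = eval p (mat_app n T Z)"
proof -
  have row: "(\<Sum>j\<le>n. T i j * Z j) = mat_app n T Z i" for i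
    using assms by (auto simp: mat_app_def is_mat_def)
  show ?thesis
    unfolding subst_def eval_sum eval_mult eval_const eval_prod eval_power
    unfolding eval_def[of p] mval_def
    by (rule sum.cong) (simp_all add: row)
qed

lemma subst_subst:
  assumes "is_mat n S" "is_mat n T"
  shows "subst n T (subst n S p) = subst n (mat_mult n S T) p"
  by (rule cpoly_eqI_eval) (simp add: eval_subst assms mat_app_mat_mult)

lemma ideal_comp_comp:
  assumes "is_mat n S" "is_mat n T"
  shows "ideal_comp n (ideal_comp n I S) T = ideal_comp n I (mat_mult n S T)"
  unfolding ideal_comp_def image_image subst_subst[OF assms] ..

lemma in_vars_subst: "in_vars n (subst n T p)"
  unfolding subst_def
  by (intro in_vars_sum in_vars_mult in_vars_prod in_vars_power in_vars_const) (auto intro: in_vars_Var)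

lemma homog_subst:
  assumes "homog d p" shows "homog d (subst n T p)"
  unfolding subst_def
proof (rule homog_sum)
  fix \<alpha> assume a: "\<alpha> \<in> Poly_Mapping.keys p"
  have "homog (\<Sum>i\<in>Poly_Mapping.keys \<alpha>. Poly_Mapping.lookup \<alpha> i * 1)
      (\<Prod>i\<in>Poly_Mapping.keys \<alpha>. (\<Sum>j\<le>n. const (T i j) * Var j) ^ Poly_Mapping.lookup \<alpha> i)"
    by (rule homog_prod) (rule homog_power[OF homog_lin])
  then have "homog (mdeg \<alpha>) (\<Prod>i\<in>Poly_Mapping.keys \<alpha>. (\<Sum>j\<le>n. const (T i j) * Var j) ^ Poly_Mapping.lookup \<alpha> i)"
    by (simp add: mdeg_def)
  moreover have "mdeg \<alpha> = d" using assms a by (simp add: homog_def)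
  ultimately show "homog d (const (Poly_Mapping.lookup p \<alpha>) *
       (\<Prod>i\<in>Poly_Mapping.keys \<alpha>. (\<Sum>j\<le>n. const (T i j) * Var j) ^ Poly_Mapping.lookup \<alpha> i))"
    using homog_mult[OF homog_const] by fastforce
qed

section \<open>Polarization\<close>

lemma infinite_unit_circle: "infinite {\<omega>::complex. cmod \<omega> = 1}"
proof
  assume fin: "finite {\<omega>::complex. cmod \<omega> = 1}"
  let ?C = "card {\<omega>::complex. cmod \<omega> = 1}"
  have sub: "{z::complex. z ^ Suc ?C = 1} \<subseteq> {\<omega>. cmod \<omega> = 1}"
  proof
    fix z :: complex assume "z \<in> {z. z ^ Suc ?C = 1}"
    then show "z \<in> {\<omega>. cmod \<omega> = 1}" using power_eq_1_iff[of z "Suc ?C"] by simp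
  qed
  have "Suc ?C = card {z::complex. z ^ Suc ?C = 1}"
    by (rule card_roots_unity_eq[symmetric]) simp
  also have "\<dots> \<le> ?C" by (rule card_mono[OF fin sub])
  finally show False by simp
qed

lemma poly_zero_on_infinite:
  fixes P :: "complex poly"
  assumes "infinite S" "\<And>x. x \<in> S \<Longrightarrow> poly P x = 0"
  shows "P = 0"
proof (rule ccontr)
  assume "P \<noteq> 0"
  then have "finite {x. poly P x = 0}" by (rule poly_roots_finite)
  moreover have "S \<subseteq> {x. poly P x = 0}" using assms(2) by auto
  ultimately show False using assms(1) finite_subset by blast
qed

lemma sum_z_conj_z_homog_part_eq_0:
  fixes a :: "nat \<Rightarrow> nat \<Rightarrow> complex"
  assumes hyp: "\<And>\<zeta>. (\<Sum>j\<le>N. \<Sum>k\<le>N. a j k * \<zeta>^j * cnj \<zeta> ^ k) = 0"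
  shows "(\<Sum>j\<le>N. \<Sum>k\<le>N. if j + k = s then a j k * \<omega>^j * cnj \<omega> ^ k else 0) = 0"
proof -
  \<comment> \<open>Along the real line through \<omega> the sum is a polynomial in the real parameter,
      whose coefficient of degree s is the claimed sum.\<close>
  define P where "P = (\<Sum>j\<le>N. \<Sum>k\<le>N. Polynomial.monom (a j k * \<omega>^j * cnj \<omega> ^ k) (j+k))"
  have "poly P x = 0" if "x \<in> range complex_of_real" for x
  proof -
    obtain t where t: "x = complex_of_real t" using \<open>x \<in> range complex_of_real\<close> by blast
    have cx: "cnj x = x" using t by simp
    have "poly P x = (\<Sum>j\<le>N. \<Sum>k\<le>N. a j k * \<omega>^j * cnj \<omega> ^ k * x^(j+k))"
      unfolding P_def poly_sum by (intro sum.cong refl) (simp add: poly_monom)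
    also have "\<dots> = (\<Sum>j\<le>N. \<Sum>k\<le>N. a j k * (x * \<omega>)^j * cnj (x * \<omega>) ^ k)"
      by (intro sum.cong refl) (simp add: cx power_mult_distrib power_add mult_ac)
    finally have "poly P x = (\<Sum>j\<le>N. \<Sum>k\<le>N. a j k * (x * \<omega>)^j * cnj (x * \<omega>) ^ k)" .
    also have "\<dots> = 0" by (rule hyp)
    finally show ?thesis .
  qed
  moreover have "infinite (range complex_of_real)"
    by (metis finite_imageD inj_of_real infinite_UNIV_char_0)
  ultimately have "P = 0" using poly_zero_on_infinite by blast
  then have "coeff P s = 0" by simp
  moreover have "coeff P s = (\<Sum>j\<le>N. \<Sum>k\<le>N. if j + k = s then a j k * \<omega>^j * cnj \<omega> ^ k else 0)"
    unfolding P_def coeff_sum by (intro sum.cong refl) simp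
  ultimately show ?thesis by simp
qed

lemma coeff_eq_0_if_sum_z_conj_z_eq_0:
  fixes a :: "nat \<Rightarrow> nat \<Rightarrow> complex"
  assumes hyp: "\<And>\<zeta>. (\<Sum>j\<le>N. \<Sum>k\<le>N. a j k * \<zeta>^j * cnj \<zeta> ^ k) = 0"
    and jk: "j0 \<le> N" "k0 \<le> N"
  shows "a j0 k0 = 0"
proof -
  \<comment> \<open>On the unit circle cnj \<omega> = 1/\<omega>, so \<omega>^s times the part of degree s = j0 + k0 is a
      polynomial in \<omega> in which a j k is the coefficient of \<omega>^(2j).\<close>
  define s where "s = j0 + k0"
  define Q where "Q = (\<Sum>j\<le>N. \<Sum>k\<le>N. if j + k = s then Polynomial.monom (a j k) (2*j) else 0)"
  have "poly Q \<omega> = 0" if "\<omega> \<in> {\<omega>. cmod \<omega> = 1}" for \<omega>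
  proof -
    have cw: "cnj \<omega> * \<omega> = 1"
      using that complex_norm_square[of \<omega>] by (simp add: mult.commute)
    have tm: "(a j k * \<omega>^j * cnj \<omega> ^ k) * \<omega> ^ (j+k) = a j k * \<omega> ^ (2*j)" for j k
    proof -
      have "(a j k * \<omega>^j * cnj \<omega> ^ k) * \<omega> ^ (j+k) = a j k * (\<omega>^j * \<omega>^j) * (cnj \<omega> * \<omega>)^k"
        by (simp add: power_add power_mult_distrib mult_ac)
      then show ?thesis using cw by (simp add: mult_2 power_add)
    qed
    have "poly Q \<omega> = (\<Sum>j\<le>N. \<Sum>k\<le>N. if j + k = s then a j k * \<omega> ^ (2*j) else 0)"
      unfolding Q_def poly_sum by (intro sum.cong refl) (simp add: poly_monom)
    also have "\<dots> = (\<Sum>j\<le>N. \<Sum>k\<le>N. if j + k = s then (a j k * \<omega>^j * cnj \<omega> ^ k) * \<omega> ^ s else 0)"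
    proof (intro sum.cong refl)
      fix j k
      show "(if j + k = s then a j k * \<omega> ^ (2*j) else 0) = (if j + k = s then (a j k * \<omega>^j * cnj \<omega> ^ k) * \<omega> ^ s else 0)"
      proof (cases "j + k = s")
        case True
        show ?thesis by (simp only: True[symmetric] if_True tm)
      qed simp
    qed
    also have "\<dots> = (\<Sum>j\<le>N. \<Sum>k\<le>N. if j + k = s then a j k * \<omega>^j * cnj \<omega> ^ k else 0) * \<omega> ^ s"
      unfolding sum_distrib_right by (intro sum.cong refl) simp
    also have "\<dots> = 0" by (simp add: sum_z_conj_z_homog_part_eq_0[OF hyp])
    finally show ?thesis .
  qed
  then have "Q = 0" using poly_zero_on_infinite[OF infinite_unit_circle] by blast
  then have "0 = coeff Q (2*j0)" by simp
  also have "\<dots> = (\<Sum>j\<le>N. \<Sum>k\<le>N. if j = j0 \<and> k = k0 then a j k else 0)"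
    unfolding Q_def coeff_sum by (intro sum.cong refl) (auto simp: s_def)
  also have "\<dots> = (\<Sum>j\<le>N. if j = j0 then a j k0 else 0)"
    by (intro sum.cong refl) (use jk in \<open>auto\<close>)
  also have "\<dots> = a j0 k0" using jk by simp
  finally show ?thesis by simp
qed

lemma eval_along_line_poly: "\<exists>u. \<forall>\<zeta>. eval f (\<lambda>i. Z i + \<zeta> * V i) = poly u \<zeta>"
proof -
  define u where "u = (\<Sum>\<alpha>\<in>Poly_Mapping.keys f. smult (Poly_Mapping.lookup f \<alpha>)
      (\<Prod>i\<in>Poly_Mapping.keys \<alpha>. [:Z i, V i:] ^ Poly_Mapping.lookup \<alpha> i))"
  have "eval f (\<lambda>i. Z i + \<zeta> * V i) = poly u \<zeta>" for \<zeta>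
    unfolding u_def eval_def mval_def poly_sum
    by (intro sum.cong refl) (simp add: poly_prod mult.commute)
  then show ?thesis by blast
qed

lemma polarization:
  fixes f :: "'i \<Rightarrow> cpoly" and \<sigma> :: "'i \<Rightarrow> complex"
  assumes fin: "finite I" and diag: "\<And>Z. (\<Sum>i\<in>I. \<sigma> i * eval (f i) Z * cnj (eval (f i) Z)) = 0"
  shows "(\<Sum>i\<in>I. \<sigma> i * eval (f i) Z * cnj (eval (f i) W)) = 0"
proof -
  \<comment> \<open>On the complex line through Z and W the left-hand side becomes a sesquilinear expression
      in (\<zeta>, \<xi>) whose diagonal \<zeta> = \<xi> vanishes; hence all its coefficients vanish.\<close>
  define L where "L \<zeta> = (\<lambda>j. Z j + \<zeta> * (W j - Z j))" for \<zeta>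
  have "\<forall>i. \<exists>u. \<forall>\<zeta>. eval (f i) (L \<zeta>) = poly u \<zeta>"
    unfolding L_def using eval_along_line_poly[of _ Z "\<lambda>j. W j - Z j"] by blast
  then obtain U where U: "\<And>i \<zeta>. eval (f i) (L \<zeta>) = poly (U i) \<zeta>" by metis
  define N where "N = (\<Sum>i\<in>I. degree (U i))"
  have degN: "degree (U i) \<le> N" if "i \<in> I" for i
    unfolding N_def by (rule member_le_sum) (use that fin in auto)
  have pex: "poly (U i) x = (\<Sum>j\<le>N. coeff (U i) j * x ^ j)" if "i \<in> I" for i x
    unfolding poly_altdef
    by (rule sum.mono_neutral_left) (use degN[OF that] in \<open>auto simp: coeff_eq_0\<close>)
  define a where "a j k = (\<Sum>i\<in>I. \<sigma> i * coeff (U i) j * cnj (coeff (U i) k))" for j k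
  have expand: "(\<Sum>i\<in>I. \<sigma> i * poly (U i) \<zeta> * cnj (poly (U i) \<xi>)) =
      (\<Sum>j\<le>N. \<Sum>k\<le>N. a j k * \<zeta>^j * cnj \<xi> ^ k)" for \<zeta> \<xi>
  proof -
    have "(\<Sum>i\<in>I. \<sigma> i * poly (U i) \<zeta> * cnj (poly (U i) \<xi>)) =
        (\<Sum>i\<in>I. \<sigma> i * (\<Sum>j\<le>N. coeff (U i) j * \<zeta> ^ j) * (\<Sum>k\<le>N. cnj (coeff (U i) k) * cnj \<xi> ^ k))"
      by (intro sum.cong refl) (simp add: pex)
    also have "\<dots> = (\<Sum>i\<in>I. \<Sum>j\<le>N. \<Sum>k\<le>N. \<sigma> i * ((coeff (U i) j * \<zeta> ^ j) * (cnj (coeff (U i) k) * cnj \<xi> ^ k)))"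
      by (rule sum.cong[OF refl], subst mult.assoc, subst sum_product, simp only: sum_distrib_left)
    also have "\<dots> = (\<Sum>i\<in>I. \<Sum>j\<le>N. \<Sum>k\<le>N. \<sigma> i * coeff (U i) j * cnj (coeff (U i) k) * (\<zeta>^j * cnj \<xi> ^ k))"
      by (intro sum.cong refl) (simp only: mult_ac)
    also have "\<dots> = (\<Sum>j\<le>N. \<Sum>i\<in>I. \<Sum>k\<le>N. \<sigma> i * coeff (U i) j * cnj (coeff (U i) k) * (\<zeta>^j * cnj \<xi> ^ k))"
      by (rule sum.swap)
    also have "\<dots> = (\<Sum>j\<le>N. \<Sum>k\<le>N. \<Sum>i\<in>I. \<sigma> i * coeff (U i) j * cnj (coeff (U i) k) * (\<zeta>^j * cnj \<xi> ^ k))"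
      by (rule sum.cong[OF refl]) (rule sum.swap)
    also have "\<dots> = (\<Sum>j\<le>N. \<Sum>k\<le>N. a j k * \<zeta>^j * cnj \<xi> ^ k)"
      unfolding a_def sum_distrib_right by (simp add: mult.assoc)
    finally show ?thesis .
  qed
  have "a j k = 0" if "j \<le> N" "k \<le> N" for j k
  proof (rule coeff_eq_0_if_sum_z_conj_z_eq_0[OF _ that])
    fix \<zeta>
    have "(\<Sum>j\<le>N. \<Sum>k\<le>N. a j k * \<zeta>^j * cnj \<zeta> ^ k) = (\<Sum>i\<in>I. \<sigma> i * poly (U i) \<zeta> * cnj (poly (U i) \<zeta>))"
      by (rule expand[symmetric])
    also have "\<dots> = (\<Sum>i\<in>I. \<sigma> i * eval (f i) (L \<zeta>) * cnj (eval (f i) (L \<zeta>)))"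
      by (simp add: U)
    also have "\<dots> = 0" by (rule diag)
    finally show "(\<Sum>j\<le>N. \<Sum>k\<le>N. a j k * \<zeta>^j * cnj \<zeta> ^ k) = 0" .
  qed
  note a0 = this
  have "(\<Sum>i\<in>I. \<sigma> i * poly (U i) 0 * cnj (poly (U i) 1)) = (\<Sum>j\<le>N. \<Sum>k\<le>N. a j k * 0^j * cnj 1 ^ k)"
    by (rule expand)
  also have "\<dots> = 0" using a0 by (intro sum.neutral ballI) simp
  finally have z: "(\<Sum>i\<in>I. \<sigma> i * poly (U i) 0 * cnj (poly (U i) 1)) = 0" .
  have "L 0 = Z" "L 1 = W" by (auto simp: L_def)
  then have "(\<Sum>i\<in>I. \<sigma> i * eval (f i) Z * cnj (eval (f i) W)) = (\<Sum>i\<in>I. \<sigma> i * poly (U i) 0 * cnj (poly (U i) 1))"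
    using U[of _ 0] U[of _ 1] by simp
  then show ?thesis using z by simp
qed

section \<open>Holomorphic decompositions\<close>

definition decomp_sign :: "'a list \<Rightarrow> nat \<Rightarrow> complex" where
  "decomp_sign xs i = (if i < length xs then 1 else -1)"

lemma decomp_sign_sq [simp]: "decomp_sign xs i * decomp_sign xs i = 1" by (simp add: decomp_sign_def)

lemma cnj_decomp_sign [simp]: "cnj (decomp_sign xs i) = decomp_sign xs i" by (simp add: decomp_sign_def)

lemma sum_lessThan_add_split: "(\<Sum>i<a+b. f i) = (\<Sum>i<a. f i) + (\<Sum>j<b. f (a+j::nat))"
  by (induction b) (simp_all add: add.assoc)

lemma of_real_sum_list_cmod_sq:
  "complex_of_real (\<Sum>h\<leftarrow>xs. (cmod (eval h Z))\<^sup>2) = (\<Sum>i<length xs. eval (xs!i) Z * cnj (eval (xs!i) Z))"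
proof -
  have "(\<Sum>h\<leftarrow>xs. (cmod (eval h Z))\<^sup>2) = (\<Sum>i<length xs. (cmod (eval (xs!i) Z))\<^sup>2)"
    by (simp add: sum_list_sum_nth atLeast0LessThan)
  then show ?thesis by (simp only: of_real_sum complex_norm_square)
qed

lemma bieval_hol_decomp:
  assumes "hol_decomp n q hp hm"
  shows "bieval q Z = (\<Sum>i<length (hp@hm). decomp_sign hp i * eval ((hp@hm)!i) Z * cnj (eval ((hp@hm)!i) Z))"
proof -
  have "bieval q Z = complex_of_real (\<Sum>h\<leftarrow>hp. (cmod (eval h Z))\<^sup>2) - complex_of_real (\<Sum>h\<leftarrow>hm. (cmod (eval h Z))\<^sup>2)"
    using assms by (simp add: hol_decomp_def)
  also have "\<dots> = (\<Sum>i<length hp. eval (hp!i) Z * cnj (eval (hp!i) Z)) - (\<Sum>i<length hm. eval (hm!i) Z * cnj (eval (hm!i) Z))"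
    by (simp add: of_real_sum_list_cmod_sq)
  also have "\<dots> = (\<Sum>i<length hp + length hm. decomp_sign hp i * eval ((hp@hm)!i) Z * cnj (eval ((hp@hm)!i) Z))"
    by (simp add: sum_lessThan_add_split decomp_sign_def nth_append sum_negf[symmetric] diff_conv_add_uminus)
  finally show ?thesis by simp
qed

lemma hol_decomp_polarized:
  assumes "hol_decomp n q hp hm" "hol_decomp n q kp km"
  shows "(\<Sum>i<length (hp@hm). decomp_sign hp i * eval ((hp@hm)!i) Z * cnj (eval ((hp@hm)!i) W)) =
         (\<Sum>j<length (kp@km). decomp_sign kp j * eval ((kp@km)!j) Z * cnj (eval ((kp@km)!j) W))"
proof -
  let ?H = "hp@hm" and ?K = "kp@km"
  define I where "I = {..<length ?H} <+> {..<length ?K}"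
  define f where "f x = (case x of Inl i \<Rightarrow> ?H!i | Inr j \<Rightarrow> ?K!j)" for x
  define \<sigma> where "\<sigma> x = (case x of Inl i \<Rightarrow> decomp_sign hp i | Inr j \<Rightarrow> - decomp_sign kp j)" for x
  have split: "(\<Sum>x\<in>I. \<sigma> x * eval (f x) Z * cnj (eval (f x) W)) =
     (\<Sum>i<length ?H. decomp_sign hp i * eval (?H!i) Z * cnj (eval (?H!i) W)) -
     (\<Sum>j<length ?K. decomp_sign kp j * eval (?K!j) Z * cnj (eval (?K!j) W))" for Z W
    unfolding I_def by (subst sum.Plus) (simp_all add: f_def \<sigma>_def sum_negf)
  have "(\<Sum>x\<in>I. \<sigma> x * eval (f x) Z * cnj (eval (f x) W)) = 0"
  proof (rule polarization)
    show "finite I" by (simp add: I_def)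
    fix Z
    show "(\<Sum>x\<in>I. \<sigma> x * eval (f x) Z * cnj (eval (f x) Z)) = 0"
      unfolding split bieval_hol_decomp[OF assms(1), of Z, symmetric] bieval_hol_decomp[OF assms(2), of Z, symmetric] by simp
  qed
  then show ?thesis unfolding split by (simp only: right_minus_eq)
qed

lemma hol_decomp_conj_coeff:
  assumes "hol_decomp n q hp hm" "hol_decomp n q kp km"
  shows "(\<Sum>i<length (hp@hm). decomp_sign hp i * cnj (Poly_Mapping.lookup ((hp@hm)!i) \<beta>) * eval ((hp@hm)!i) Z) =
         (\<Sum>j<length (kp@km). decomp_sign kp j * cnj (Poly_Mapping.lookup ((kp@km)!j) \<beta>) * eval ((kp@km)!j) Z)"
proof -
  let ?H = "hp@hm" and ?K = "kp@km"
  define R where "R = (\<Sum>i<length ?H. const (decomp_sign hp i * cnj (eval (?H!i) Z)) * ?H!i)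
                    - (\<Sum>j<length ?K. const (decomp_sign kp j * cnj (eval (?K!j) Z)) * ?K!j)"
  have "eval R W = 0" for W
  proof -
    have "eval R W = cnj ((\<Sum>i<length ?H. decomp_sign hp i * eval (?H!i) Z * cnj (eval (?H!i) W)) -
                       (\<Sum>j<length ?K. decomp_sign kp j * eval (?K!j) Z * cnj (eval (?K!j) W)))"
      unfolding R_def eval_diff eval_lin_comb by (simp add: mult_ac)
    also have "\<dots> = 0" using hol_decomp_polarized[OF assms, of Z W] by simp
    finally show ?thesis .
  qed
  then have "R = 0" by (rule cpoly_eq_0_if_eval_eq_0)
  then have "Poly_Mapping.lookup R \<beta> = 0" by simp
  then have "(\<Sum>i<length ?H. decomp_sign hp i * cnj (eval (?H!i) Z) * Poly_Mapping.lookup (?H!i) \<beta>) =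
             (\<Sum>j<length ?K. decomp_sign kp j * cnj (eval (?K!j) Z) * Poly_Mapping.lookup (?K!j) \<beta>)"
    unfolding R_def lookup_minus lookup_lin_comb by simp
  then have "cnj (\<Sum>i<length ?H. decomp_sign hp i * cnj (eval (?H!i) Z) * Poly_Mapping.lookup (?H!i) \<beta>) =
             cnj (\<Sum>j<length ?K. decomp_sign kp j * cnj (eval (?K!j) Z) * Poly_Mapping.lookup (?K!j) \<beta>)"
    by simp
  then show ?thesis by (simp add: mult_ac)
qed

lemma gram_matrix_invertible:
  fixes H :: "cpoly list"
  assumes indep: "lin_indep H" and finB: "finite B"
    and keys: "\<And>l. l < length H \<Longrightarrow> Poly_Mapping.keys (H!l) \<subseteq> B"
  obtains M where "\<And>i r. i < length H \<Longrightarrow> r < length H \<Longrightarrow>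
    (\<Sum>l<length H. M i l * (\<Sum>\<beta>\<in>B. Poly_Mapping.lookup (H!l) \<beta> * cnj (Poly_Mapping.lookup (H!r) \<beta>)))
      = (if i = r then 1 else 0)"
proof -
  define m where "m = length H"
  define c where "c l \<beta> = Poly_Mapping.lookup (H!l) \<beta>" for l \<beta>
  define G where "G l r = (\<Sum>\<beta>\<in>B. c l \<beta> * cnj (c r \<beta>))" for l r
  \<comment> \<open>x* G x is the squared norm of the coefficient vector of the combination
      of the H!l with coefficients cnj (x l).\<close>
  have inj: "\<forall>r<m. x r = 0" if x: "\<forall>l<m. (\<Sum>r<m. G l r * x r) = 0" for x
  proof -
    define s where "s \<beta> = (\<Sum>l<m. cnj (x l) * c l \<beta>)" for \<beta>
    have "0 = (\<Sum>l<m. cnj (x l) * (\<Sum>r<m. G l r * x r))" using x by simp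
    also have "\<dots> = (\<Sum>l<m. \<Sum>r<m. \<Sum>\<beta>\<in>B. (cnj (x l) * c l \<beta>) * (x r * cnj (c r \<beta>)))"
      unfolding G_def sum_distrib_left sum_distrib_right by (intro sum.cong refl) (simp add: mult_ac)
    also have "\<dots> = (\<Sum>l<m. \<Sum>\<beta>\<in>B. \<Sum>r<m. (cnj (x l) * c l \<beta>) * (x r * cnj (c r \<beta>)))"
      by (rule sum.cong[OF refl]) (rule sum.swap)
    also have "\<dots> = (\<Sum>\<beta>\<in>B. \<Sum>l<m. \<Sum>r<m. (cnj (x l) * c l \<beta>) * (x r * cnj (c r \<beta>)))"
      by (rule sum.swap)
    also have "\<dots> = (\<Sum>\<beta>\<in>B. s \<beta> * cnj (s \<beta>))"
      unfolding s_def cnj_sum by (intro sum.cong refl) (simp add: sum_product)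
    also have "\<dots> = complex_of_real (\<Sum>\<beta>\<in>B. (cmod (s \<beta>))\<^sup>2)"
      by (simp only: of_real_sum complex_norm_square)
    finally have "complex_of_real (\<Sum>\<beta>\<in>B. (cmod (s \<beta>))\<^sup>2) = 0" by (rule sym)
    then have "(\<Sum>\<beta>\<in>B. (cmod (s \<beta>))\<^sup>2) = 0" by (rule of_real_eq_0_iff[THEN iffD1])
    then have sB: "s \<beta> = 0" if "\<beta> \<in> B" for \<beta>
      using sum_nonneg_eq_0_iff[OF finB, of "\<lambda>\<beta>. (cmod (s \<beta>))\<^sup>2"] that by simp
    have "(\<Sum>l<length H. const (cnj (x l)) * H!l) = 0"
    proof (rule poly_mapping_eqI)
      fix \<beta>
      have "Poly_Mapping.lookup (\<Sum>l<length H. const (cnj (x l)) * H!l) \<beta> = s \<beta>"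
        by (simp add: s_def c_def m_def)
      also have "\<dots> = 0"
      proof (cases "\<beta> \<in> B")
        case True then show ?thesis by (rule sB)
      next
        case False
        then have "c l \<beta> = 0" if "l < m" for l using that keys[of l] False by (auto simp: m_def c_def in_keys_iff)
        then show ?thesis by (simp add: s_def)
      qed
      finally show "Poly_Mapping.lookup (\<Sum>l<length H. const (cnj (x l)) * H!l) \<beta> = Poly_Mapping.lookup 0 \<beta>" by simp
    qed
    then have "\<forall>l<length H. cnj (x l) = 0" using indep unfolding lin_indep_def
      by (rule_tac allE[of _ "\<lambda>l. cnj (x l)"]) auto
    then show ?thesis by (simp add: m_def)
  qed
  obtain M where M: "\<And>i r. i < m \<Longrightarrow> r < m \<Longrightarrow> (\<Sum>l<m. M i l * G l r) = (if i = r then 1 else 0)"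
    using left_inverse_if_injective[of m G] inj by blast
  show ?thesis using M unfolding m_def G_def c_def by (rule that)
qed

text \<open>Comparing the coefficients of Z^\<beta> in the polarized identity puts, for every \<beta>, the
  combination of the H!r with coefficients sign r * cnj (coefficient of Z^\<beta> in H!r) into the span
  of the second decomposition; inverting the Gram matrix of the H!r recovers each H!i.\<close>
lemma hol_decomp_in_span:
  assumes d1: "hol_decomp n q hp hm" and d2: "hol_decomp n q kp km" and i: "i < length (hp@hm)"
  shows "\<exists>c. (hp@hm)!i = (\<Sum>j<length (kp@km). const (c j) * (kp@km)!j)"
proof -
  define H where "H = hp@hm"
  define K where "K = kp@km"
  define m where "m = length H"
  define m' where "m' = length K"
  define c where "c l \<beta> = Poly_Mapping.lookup (H!l) \<beta>" for l \<beta>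
  define d where "d j \<beta> = Poly_Mapping.lookup (K!j) \<beta>" for j \<beta>
  define B where "B = (\<Union>l<m. Poly_Mapping.keys (H!l))"
  have finB: "finite B" by (simp add: B_def)
  have coeff: "(\<Sum>r<m. decomp_sign hp r * cnj (c r \<beta>) * eval (H!r) Z) = (\<Sum>j<m'. decomp_sign kp j * cnj (d j \<beta>) * eval (K!j) Z)" for \<beta> Z
    using hol_decomp_conj_coeff[OF d1 d2, of \<beta> Z] by (simp add: H_def K_def m_def m'_def c_def d_def)
  define G where "G l r = (\<Sum>\<beta>\<in>B. c l \<beta> * cnj (c r \<beta>))" for l r
  define E where "E l j = (\<Sum>\<beta>\<in>B. c l \<beta> * cnj (d j \<beta>))" for l j
  have gram: "(\<Sum>r<m. G l r * (decomp_sign hp r * eval (H!r) Z)) = (\<Sum>j<m'. E l j * (decomp_sign kp j * eval (K!j) Z))" for l Z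
  proof -
    have "(\<Sum>r<m. G l r * (decomp_sign hp r * eval (H!r) Z)) = (\<Sum>r<m. \<Sum>\<beta>\<in>B. c l \<beta> * (decomp_sign hp r * cnj (c r \<beta>) * eval (H!r) Z))"
      unfolding G_def sum_distrib_right by (intro sum.cong refl) (simp add: mult_ac)
    also have "\<dots> = (\<Sum>\<beta>\<in>B. \<Sum>r<m. c l \<beta> * (decomp_sign hp r * cnj (c r \<beta>) * eval (H!r) Z))"
      by (rule sum.swap)
    also have "\<dots> = (\<Sum>\<beta>\<in>B. c l \<beta> * (\<Sum>j<m'. decomp_sign kp j * cnj (d j \<beta>) * eval (K!j) Z))"
      by (simp add: sum_distrib_left[symmetric] coeff)
    also have "\<dots> = (\<Sum>j<m'. \<Sum>\<beta>\<in>B. c l \<beta> * (decomp_sign kp j * cnj (d j \<beta>) * eval (K!j) Z))"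
      unfolding sum_distrib_left by (rule sum.swap)
    also have "\<dots> = (\<Sum>j<m'. E l j * (decomp_sign kp j * eval (K!j) Z))"
      unfolding E_def sum_distrib_right by (intro sum.cong refl) (simp add: mult_ac)
    finally show ?thesis .
  qed
  obtain M where M: "\<And>i r. i < m \<Longrightarrow> r < m \<Longrightarrow> (\<Sum>l<m. M i l * G l r) = (if i = r then 1 else 0)"
    using gram_matrix_invertible[of H B] d1 finB
    by (auto simp: hol_decomp_def H_def m_def G_def c_def B_def)
  define MC where "MC j = (\<Sum>l<m. M i l * E l j)" for j
  define a where "a j = decomp_sign hp i * MC j * decomp_sign kp j" for j
  have im: "i < m" using i by (simp add: m_def H_def)
  have "eval (H!i) Z = eval (\<Sum>j<m'. const (a j) * K!j) Z" for Z
  proof -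
    have "decomp_sign hp i * eval (H!i) Z = (\<Sum>r<m. (if i = r then 1 else 0) * (decomp_sign hp r * eval (H!r) Z))"
    proof -
      have "(\<Sum>r<m. (if i = r then 1 else 0) * (decomp_sign hp r * eval (H!r) Z)) = (\<Sum>r<m. if r = i then decomp_sign hp r * eval (H!r) Z else 0)"
        by (intro sum.cong refl) auto
      then show ?thesis using im by simp
    qed
    also have "\<dots> = (\<Sum>r<m. (\<Sum>l<m. M i l * G l r) * (decomp_sign hp r * eval (H!r) Z))"
      by (intro sum.cong refl) (simp add: M im)
    also have "\<dots> = (\<Sum>l<m. M i l * (\<Sum>r<m. G l r * (decomp_sign hp r * eval (H!r) Z)))"
      unfolding sum_distrib_right sum_distrib_left by (subst sum.swap) (simp add: mult_ac)
    also have "\<dots> = (\<Sum>l<m. M i l * (\<Sum>j<m'. E l j * (decomp_sign kp j * eval (K!j) Z)))"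
      by (simp add: gram)
    also have "\<dots> = (\<Sum>j<m'. (\<Sum>l<m. M i l * E l j) * decomp_sign kp j * eval (K!j) Z)"
      unfolding sum_distrib_right sum_distrib_left by (subst sum.swap) (simp add: mult_ac)
    finally have "decomp_sign hp i * eval (H!i) Z = (\<Sum>j<m'. (\<Sum>l<m. M i l * E l j) * decomp_sign kp j * eval (K!j) Z)" .
    then have "decomp_sign hp i * (decomp_sign hp i * eval (H!i) Z) = decomp_sign hp i * (\<Sum>j<m'. (\<Sum>l<m. M i l * E l j) * decomp_sign kp j * eval (K!j) Z)"
      by simp
    then have "eval (H!i) Z = decomp_sign hp i * (\<Sum>j<m'. MC j * decomp_sign kp j * eval (K!j) Z)"
      unfolding MC_def[symmetric] by (simp only: mult.assoc[symmetric] decomp_sign_sq mult_1_left)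
    then show ?thesis
      unfolding eval_lin_comb a_def sum_distrib_left by (simp only: mult.assoc)
  qed
  then have "H!i = (\<Sum>j<m'. const (a j) * K!j)" by (rule cpoly_eqI_eval)
  then show ?thesis by (auto simp: H_def K_def m'_def)
qed

lemma hol_decomp_ideal_subset:
  assumes d1: "hol_decomp n q hp hm" and d2: "hol_decomp n q kp km"
  shows "ideal_gen n (set hp \<union> set hm) \<subseteq> ideal_gen n (set kp \<union> set km)"
proof (rule ideal_gen_mono, rule subsetI)
  fix h assume "h \<in> set hp \<union> set hm"
  then obtain i where i: "i < length (hp@hm)" "h = (hp@hm)!i"
    by (metis in_set_conv_nth set_append)
  obtain c where c: "(hp@hm)!i = (\<Sum>j<length (kp@km). const (c j) * (kp@km)!j)"
    using hol_decomp_in_span[OF d1 d2 i(1)] by blast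
  have "(\<Sum>j<length (kp@km). const (c j) * (kp@km)!j) \<in> ideal_gen n (set kp \<union> set km)"
    by (rule ideal_gen_sum, rule ideal_gen_mult[OF in_vars_const], rule ideal_gen_gen)
       (metis lessThan_iff nth_mem set_append)
  then show "h \<in> ideal_gen n (set kp \<union> set km)" using i c by simp
qed

lemma hol_decomp_ideal_unique:
  assumes "hol_decomp n q hp hm" "hol_decomp n q kp km"
  shows "ideal_gen n (set hp \<union> set hm) = ideal_gen n (set kp \<union> set km)"
  using hol_decomp_ideal_subset[OF assms] hol_decomp_ideal_subset[OF assms(2,1)] by blast

lemma lin_indep_swap:
  assumes "lin_indep (xs @ ys)" shows "lin_indep (ys @ xs)"
  unfolding lin_indep_def
proof (rule allI, rule impI)
  fix c assume c: "(\<Sum>i<length (ys @ xs). const (c i) * (ys @ xs) ! i) = 0"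
  define c' where "c' i = (if i < length xs then c (length ys + i) else c (i - length xs))" for i
  have "(\<Sum>i<length (xs @ ys). const (c' i) * (xs @ ys) ! i) =
        (\<Sum>i<length xs. const (c (length ys + i)) * xs ! i) + (\<Sum>j<length ys. const (c j) * ys ! j)"
    by (simp add: sum_lessThan_add_split c'_def nth_append)
  also have "\<dots> = (\<Sum>j<length ys. const (c j) * ys ! j) + (\<Sum>i<length xs. const (c (length ys + i)) * xs ! i)"
    by (rule add.commute)
  also have "\<dots> = (\<Sum>i<length (ys @ xs). const (c i) * (ys @ xs) ! i)"
    by (simp add: sum_lessThan_add_split nth_append)
  finally have "\<forall>i<length (xs @ ys). c' i = 0" using assms c unfolding lin_indep_def by simp
  then show "\<forall>i<length (ys @ xs). c i = 0"
  proof (intro allI impI)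
    fix i assume all: "\<forall>i<length (xs @ ys). c' i = 0" and i: "i < length (ys @ xs)"
    show "c i = 0"
    proof (cases "i < length ys")
      case True
      then have "c' (length xs + i) = 0" using all by simp
      then show ?thesis by (simp add: c'_def)
    next
      case False
      then have "c' (i - length ys) = 0" using all i by simp
      moreover have "i - length ys < length xs" "length ys + (i - length ys) = i" using False i by auto
      ultimately show ?thesis by (simp add: c'_def)
    qed
  qed
qed

definition scaled_subst :: "nat \<Rightarrow> complex \<Rightarrow> (nat \<Rightarrow> nat \<Rightarrow> complex) \<Rightarrow> cpoly \<Rightarrow> cpoly" where
  "scaled_subst n s T h = const s * subst n T h"

lemma eval_scaled_subst: "is_mat n T \<Longrightarrow> eval (scaled_subst n s T h) Z = s * eval h (mat_app n T Z)"
  by (simp add: scaled_subst_def eval_subst)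

lemma lin_indep_map_scaled_subst:
  assumes li: "lin_indep L" and vars: "\<forall>h\<in>set L. in_vars n h" and s: "s \<noteq> 0"
    and T: "is_mat n T" and inv: "mat_left_inv n T T'"
  shows "lin_indep (map (scaled_subst n s T) L)"
  unfolding lin_indep_def
proof (rule allI, rule impI)
  fix c assume c: "(\<Sum>i<length (map (scaled_subst n s T) L). const (c i) * map (scaled_subst n s T) L ! i) = 0"
  have "eval (\<Sum>i<length L. const (c i) * L ! i) W = 0" for W
  proof -
    have "s * eval (\<Sum>i<length L. const (c i) * L ! i) W = s * (\<Sum>i<length L. c i * eval (L ! i) (mat_app n T (mat_app n T' W)))"
      using vars by (simp add: mat_app_left_inv[OF inv] eval_trunc_vec)
    also have "\<dots> = eval (\<Sum>i<length (map (scaled_subst n s T) L). const (c i) * map (scaled_subst n s T) L ! i) (mat_app n T' W)"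
      by (simp add: eval_scaled_subst[OF T] sum_distrib_left mult_ac)
    also have "\<dots> = 0" using c by simp
    finally show ?thesis using s by simp
  qed
  then have "(\<Sum>i<length L. const (c i) * L ! i) = 0" by (rule cpoly_eq_0_if_eval_eq_0)
  then show "\<forall>i<length (map (scaled_subst n s T) L). c i = 0" using li unfolding lin_indep_def by simp
qed

lemma sum_list_cmod_sq_scaled_subst:
  assumes "is_mat n T"
  shows "(\<Sum>h\<leftarrow>map (scaled_subst n s T) L. (cmod (eval h Z))\<^sup>2) = (cmod s)\<^sup>2 * (\<Sum>h\<leftarrow>L. (cmod (eval h (mat_app n T Z)))\<^sup>2)"
  by (induction L) (simp_all add: eval_scaled_subst[OF assms] norm_mult power_mult_distrib algebra_simps)

lemma hol_decomp_transport:
  assumes d: "hol_decomp n qF hp hm"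
    and rel: "\<And>Z. bieval qG Z = complex_of_real \<kappa> * bieval qF (mat_app n T Z)"
    and \<kappa>: "\<kappa> \<noteq> 0" and T: "is_mat n T" and inv: "mat_left_inv n T T'"
  shows "\<exists>kp km. hol_decomp n qG kp km \<and>
           set kp \<union> set km = scaled_subst n (complex_of_real (sqrt \<bar>\<kappa>\<bar>)) T ` (set hp \<union> set hm)"
proof -
  define s where "s = complex_of_real (sqrt \<bar>\<kappa>\<bar>)"
  have s0: "s \<noteq> 0" using \<kappa> by (simp add: s_def)
  have cs: "(cmod s)\<^sup>2 = \<bar>\<kappa>\<bar>" by (simp add: s_def)
  let ?g = "scaled_subst n s T"
  obtain dp where dp: "\<forall>h\<in>set hp. in_vars n h \<and> homog dp h" using d by (auto simp: hol_decomp_def)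
  obtain dm where dm: "\<forall>h\<in>set hm. in_vars n h \<and> homog dm h" using d by (auto simp: hol_decomp_def)
  have li: "lin_indep (hp @ hm)" using d by (simp add: hol_decomp_def)
  have ev: "bieval qF W = complex_of_real ((\<Sum>h\<leftarrow>hp. (cmod (eval h W))\<^sup>2) - (\<Sum>h\<leftarrow>hm. (cmod (eval h W))\<^sup>2))" for W
    using d by (simp add: hol_decomp_def)
  have gvars: "\<forall>h\<in>set (map ?g xs). in_vars n h \<and> homog d h" if "\<forall>h\<in>set xs. in_vars n h \<and> homog d h" for xs d
    using that homog_mult[OF homog_const homog_subst, of d _ s n T]
    by (auto simp: scaled_subst_def intro!: in_vars_mult in_vars_subst)
  have li': "lin_indep (map ?g (hp @ hm))"
    by (rule lin_indep_map_scaled_subst[OF li _ s0 T inv]) (use dp dm in auto)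
  show ?thesis
  proof (cases "\<kappa> > 0")
    case True
    have "hol_decomp n qG (map ?g hp) (map ?g hm)"
      unfolding hol_decomp_def
    proof (intro conjI allI)
      show "\<exists>d. \<forall>h\<in>set (map ?g hp). in_vars n h \<and> homog d h" using gvars[OF dp] by blast
      show "\<exists>d. \<forall>h\<in>set (map ?g hm). in_vars n h \<and> homog d h" using gvars[OF dm] by blast
      show "lin_indep (map ?g hp @ map ?g hm)" using li' by simp
      fix Z show "bieval qG Z = complex_of_real ((\<Sum>h\<leftarrow>map ?g hp. (cmod (eval h Z))\<^sup>2) - (\<Sum>h\<leftarrow>map ?g hm. (cmod (eval h Z))\<^sup>2))"
        unfolding sum_list_cmod_sq_scaled_subst[OF T] cs rel ev using True by (simp add: right_diff_distrib)
    qed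
    then show ?thesis unfolding s_def[symmetric] by (intro exI[of _ "map ?g hp"] exI[of _ "map ?g hm"]) auto
  next
    case False
    then have neg: "\<kappa> < 0" using \<kappa> by simp
    have "hol_decomp n qG (map ?g hm) (map ?g hp)"
      unfolding hol_decomp_def
    proof (intro conjI allI)
      show "\<exists>d. \<forall>h\<in>set (map ?g hm). in_vars n h \<and> homog d h" using gvars[OF dm] by blast
      show "\<exists>d. \<forall>h\<in>set (map ?g hp). in_vars n h \<and> homog d h" using gvars[OF dp] by blast
      show "lin_indep (map ?g hm @ map ?g hp)" using lin_indep_swap[of "map ?g hp" "map ?g hm"] li' by simp
      fix Z show "bieval qG Z = complex_of_real ((\<Sum>h\<leftarrow>map ?g hm. (cmod (eval h Z))\<^sup>2) - (\<Sum>h\<leftarrow>map ?g hp. (cmod (eval h Z))\<^sup>2))"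
        unfolding sum_list_cmod_sq_scaled_subst[OF T] cs rel ev using neg by (simp add: right_diff_distrib)
    qed
    then show ?thesis unfolding s_def[symmetric] by (intro exI[of _ "map ?g hm"] exI[of _ "map ?g hp"]) auto
  qed
qed

lemma subst_image_ideal_gen_subset:
  assumes s0: "s \<noteq> 0" and T: "is_mat n T"
  shows "subst n T ` ideal_gen n S \<subseteq> ideal_gen n (scaled_subst n s T ` S)"
proof
  fix x assume "x \<in> subst n T ` ideal_gen n S"
  then obtain L where L: "\<forall>(a, h)\<in>set L. in_vars n a \<and> h \<in> S" and x: "x = subst n T (\<Sum>(a, h)\<leftarrow>L. a * h)"
    by (auto simp: ideal_gen_def)
  define L' where "L' = map (\<lambda>(a,h). (const (1/s) * subst n T a, scaled_subst n s T h)) L"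
  have "eval x Z = eval (\<Sum>(g, h)\<leftarrow>L'. g * h) Z" for Z
  proof -
    have "eval x Z = (\<Sum>(a,h)\<leftarrow>L. eval a (mat_app n T Z) * eval h (mat_app n T Z))"
      by (simp add: x eval_subst[OF T] eval_sum_list_mult)
    also have "\<dots> = (\<Sum>(a,h)\<leftarrow>L. eval (const (1/s) * subst n T a) Z * eval (scaled_subst n s T h) Z)"
      by (rule sum_list_pair_cong) (simp add: eval_subst[OF T] eval_scaled_subst[OF T] s0)
    also have "\<dots> = eval (\<Sum>(g, h)\<leftarrow>L'. g * h) Z"
      unfolding L'_def sum_list_map_pair eval_sum_list_mult ..
    finally show ?thesis .
  qed
  then have "x = (\<Sum>(g, h)\<leftarrow>L'. g * h)" by (rule cpoly_eqI_eval)
  moreover have "\<forall>(g, h)\<in>set L'. in_vars n g \<and> h \<in> scaled_subst n s T ` S"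
    using L by (auto simp: L'_def intro!: in_vars_mult in_vars_subst)
  ultimately show "x \<in> ideal_gen n (scaled_subst n s T ` S)" by (auto simp: ideal_gen_def)
qed

lemma ideal_gen_scaled_subst_subset:
  assumes T: "is_mat n T" "is_mat n T'" and inv': "mat_left_inv n T' T"
  shows "ideal_gen n (scaled_subst n s T ` S) \<subseteq> subst n T ` ideal_gen n S"
proof
  fix p assume "p \<in> ideal_gen n (scaled_subst n s T ` S)"
  then obtain L where L: "\<forall>(a, x)\<in>set L. in_vars n a \<and> x \<in> scaled_subst n s T ` S" and p: "p = (\<Sum>(a, x)\<leftarrow>L. a * x)"
    by (auto simp: ideal_gen_def)
  define hof where "hof x = (SOME h. h \<in> S \<and> x = scaled_subst n s T h)" for x
  have hof: "hof x \<in> S \<and> x = scaled_subst n s T (hof x)" if "x \<in> scaled_subst n s T ` S" for x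
    unfolding hof_def by (rule someI_ex) (use that in blast)
  define L0 where "L0 = map (\<lambda>(a,x). (const s * subst n T' a, hof x)) L"
  have "eval (subst n T (\<Sum>(g, h)\<leftarrow>L0. g * h)) Z = eval p Z" for Z
  proof -
    have "eval (subst n T (\<Sum>(g, h)\<leftarrow>L0. g * h)) Z =
        (\<Sum>(a,x)\<leftarrow>L. eval (const s * subst n T' a) (mat_app n T Z) * eval (hof x) (mat_app n T Z))"
      unfolding eval_subst[OF T(1)] L0_def sum_list_map_pair eval_sum_list_mult ..
    also have "\<dots> = (\<Sum>(a,x)\<leftarrow>L. eval a Z * eval x Z)"
    proof (rule sum_list_pair_cong)
      fix a x assume ax: "(a, x) \<in> set L"
      then have a: "in_vars n a" and xS: "x \<in> scaled_subst n s T ` S" using L by auto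
      have e1: "eval (const s * subst n T' a) (mat_app n T Z) = s * eval a Z"
        using a by (simp add: eval_subst[OF T(2)] mat_app_left_inv[OF inv'] eval_trunc_vec)
      have e2: "eval x Z = s * eval (hof x) (mat_app n T Z)"
        using hof[OF xS] eval_scaled_subst[OF T(1)] by metis
      show "eval (const s * subst n T' a) (mat_app n T Z) * eval (hof x) (mat_app n T Z) = eval a Z * eval x Z"
        unfolding e1 e2 by (simp only: mult_ac)
    qed
    also have "\<dots> = eval p Z" by (simp add: p eval_sum_list_mult)
    finally show ?thesis .
  qed
  then have "subst n T (\<Sum>(g, h)\<leftarrow>L0. g * h) = p" by (rule cpoly_eqI_eval)
  moreover have "(\<Sum>(g, h)\<leftarrow>L0. g * h) \<in> ideal_gen n S"
    unfolding ideal_gen_def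
  proof (rule CollectI, rule exI[of _ L0], rule conjI)
    show "\<forall>(g, h)\<in>set L0. in_vars n g \<and> h \<in> S"
      using L hof by (auto simp: L0_def intro!: in_vars_mult in_vars_subst)
  qed simp
  ultimately show "p \<in> subst n T ` ideal_gen n S" by blast
qed

lemma ideal_gen_scaled_subst_image:
  assumes "s \<noteq> 0" "is_mat n T" "is_mat n T'" "mat_left_inv n T' T"
  shows "ideal_gen n (scaled_subst n s T ` S) = subst n T ` ideal_gen n S"
  using subst_image_ideal_gen_subset[OF assms(1,2)] ideal_gen_scaled_subst_subset[OF assms(2-4)] by blast

section \<open>Generic initial ideals under changes of coordinates\<close>

lemma mat_mult_entry_dist_bound:
  assumes XY: "\<forall>k\<le>n. \<forall>j\<le>n. cmod (X k j - Y k j) < d" and d: "d > 0" and ij: "i \<le> n" "j \<le> n"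
  shows "cmod (mat_mult n A X i j - mat_mult n A Y i j) < (1 + (\<Sum>i\<le>n. \<Sum>k\<le>n. cmod (A i k))) * d"
proof -
  have "mat_mult n A X i j - mat_mult n A Y i j = (\<Sum>k\<le>n. A i k * (X k j - Y k j))"
    using ij by (simp add: mat_mult_def sum_subtractf right_diff_distrib)
  then have "cmod (mat_mult n A X i j - mat_mult n A Y i j) \<le> (\<Sum>k\<le>n. cmod (A i k) * cmod (X k j - Y k j))"
    by (metis (no_types, lifting) norm_mult norm_sum sum.cong)
  also have "\<dots> \<le> (\<Sum>k\<le>n. cmod (A i k) * d)"
    by (intro sum_mono mult_left_mono) (use XY ij in \<open>auto intro: less_imp_le\<close>)
  also have "\<dots> = (\<Sum>k\<le>n. cmod (A i k)) * d" by (simp add: sum_distrib_right)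
  also have "\<dots> \<le> (\<Sum>i\<le>n. \<Sum>k\<le>n. cmod (A i k)) * d"
    by (intro mult_right_mono member_le_sum[where f = "\<lambda>i. \<Sum>k\<le>n. cmod (A i k)"]) (use ij d in \<open>auto intro: sum_nonneg\<close>)
  also have "\<dots> < (1 + (\<Sum>i\<le>n. \<Sum>k\<le>n. cmod (A i k))) * d" using d by (simp add: distrib_right)
  finally show ?thesis .
qed

lemma invertible_mat_mult:
  assumes T: "Defs.invertible_mat n T" and A: "mat_mult n A' A = mat_id n"
  shows "Defs.invertible_mat n (mat_mult n A T)"
proof -
  obtain S where S: "mat_mult n S T = mat_id n" and Tm: "is_mat n T" using T by (auto simp: invertible_mat_iff)
  have "mat_mult n (mat_mult n S A') (mat_mult n A T) = mat_mult n S (mat_mult n (mat_mult n A' A) T)"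
    by (simp add: mat_mult_assoc)
  also have "\<dots> = mat_id n" using A Tm S by (simp add: mat_mult_id_left)
  finally show ?thesis by (auto simp: invertible_mat_iff)
qed

lemma mat_mult_cancel_left:
  assumes "mat_mult n \<sigma>' \<sigma> = mat_id n" "is_mat n T"
  shows "mat_mult n \<sigma>' (mat_mult n \<sigma> T) = T"
  using assms by (simp add: mat_mult_assoc mat_mult_id_left)

lemma dense_open_GL_mult_left:
  assumes U: "dense_open_GL n U"
    and inv1: "mat_mult n \<sigma> \<sigma>' = mat_id n" and inv2: "mat_mult n \<sigma>' \<sigma> = mat_id n"
  shows "dense_open_GL n (mat_mult n \<sigma> ` U)"
proof -
  have U1: "U \<subseteq> {T. Defs.invertible_mat n T}"
    and U2: "\<And>T. T \<in> U \<Longrightarrow> \<exists>e>0. \<forall>S. Defs.invertible_mat n S \<and> (\<forall>i\<le>n. \<forall>j\<le>n. cmod (S i j - T i j) < e) \<longrightarrow> S \<in> U"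
    and U3: "\<And>T e. Defs.invertible_mat n T \<Longrightarrow> e > 0 \<Longrightarrow> \<exists>S\<in>U. \<forall>i\<le>n. \<forall>j\<le>n. cmod (S i j - T i j) < e"
    using U unfolding dense_open_GL_def by blast+
  define M' where "M' = 1 + (\<Sum>i\<le>n. \<Sum>k\<le>n. cmod (\<sigma>' i k))"
  define M where "M = 1 + (\<Sum>i\<le>n. \<Sum>k\<le>n. cmod (\<sigma> i k))"
  have M'pos: "M' > 0" and Mpos: "M > 0" by (simp_all add: M'_def M_def add_pos_nonneg sum_nonneg)
  have "\<exists>e>0. \<forall>S. Defs.invertible_mat n S \<and> (\<forall>i\<le>n. \<forall>j\<le>n. cmod (S i j - mat_mult n \<sigma> T i j) < e)
          \<longrightarrow> S \<in> mat_mult n \<sigma> ` U" if T: "T \<in> U" for T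
  proof -
    obtain e where e: "e > 0" "\<And>S. Defs.invertible_mat n S \<Longrightarrow> (\<forall>i\<le>n. \<forall>j\<le>n. cmod (S i j - T i j) < e) \<Longrightarrow> S \<in> U"
      using U2[OF T] by blast
    have Tm: "is_mat n T" using U1 T by (auto simp: invertible_mat_iff)
    have "S \<in> mat_mult n \<sigma> ` U"
      if S: "Defs.invertible_mat n S" "\<forall>i\<le>n. \<forall>j\<le>n. cmod (S i j - mat_mult n \<sigma> T i j) < e / M'" for S
    proof -
      have "cmod (mat_mult n \<sigma>' S i j - T i j) < e" if "i \<le> n" "j \<le> n" for i j
        using mat_mult_entry_dist_bound[of n S "mat_mult n \<sigma> T" "e / M'" i j \<sigma>'] S(2) that e(1) M'pos
        by (simp add: M'_def mat_mult_cancel_left[OF inv2 Tm])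
      then have "mat_mult n \<sigma>' S \<in> U" using e(2) invertible_mat_mult[OF S(1) inv1] by blast
      moreover have "S = mat_mult n \<sigma> (mat_mult n \<sigma>' S)"
        using S(1) by (simp add: mat_mult_cancel_left[OF inv1] invertible_mat_iff)
      ultimately show ?thesis by blast
    qed
    then show ?thesis using e(1) M'pos by (intro exI[of _ "e / M'"]) auto
  qed
  moreover have "\<exists>S\<in>mat_mult n \<sigma> ` U. \<forall>i\<le>n. \<forall>j\<le>n. cmod (S i j - T i j) < e"
    if T: "Defs.invertible_mat n T" and e: "e > 0" for T e
  proof -
    obtain S where S: "S \<in> U" "\<forall>i\<le>n. \<forall>j\<le>n. cmod (S i j - mat_mult n \<sigma>' T i j) < e / M"
      using U3[OF invertible_mat_mult[OF T inv1], of "e / M"] e Mpos by auto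
    have "cmod (mat_mult n \<sigma> S i j - T i j) < e" if "i \<le> n" "j \<le> n" for i j
      using mat_mult_entry_dist_bound[of n S "mat_mult n \<sigma>' T" "e / M" i j \<sigma>] S(2) that e Mpos T
      by (simp add: M_def mat_mult_cancel_left[OF inv1] invertible_mat_iff)
    then show ?thesis using S(1) by blast
  qed
  ultimately show ?thesis
    using U1 invertible_mat_mult[OF _ inv2] unfolding dense_open_GL_def by blast
qed

lemma gin_witness_transfer:
  assumes U: "dense_open_GL n U" and J: "\<forall>T\<in>U. init_ideal n lo (ideal_comp n I T) = J"
    and inv1: "mat_mult n \<sigma> \<sigma>' = mat_id n" and inv2: "mat_mult n \<sigma>' \<sigma> = mat_id n"
    and eq: "\<And>T. is_mat n T \<Longrightarrow> ideal_comp n I' (mat_mult n \<sigma> T) = ideal_comp n I T"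
  shows "\<exists>U'. dense_open_GL n U' \<and> (\<forall>T\<in>U'. init_ideal n lo (ideal_comp n I' T) = J)"
proof (intro exI conjI)
  show "dense_open_GL n (mat_mult n \<sigma> ` U)" by (rule dense_open_GL_mult_left[OF U inv1 inv2])
  have "is_mat n T" if "T \<in> U" for T using U that by (auto simp: dense_open_GL_def invertible_mat_iff)
  then show "\<forall>T\<in>mat_mult n \<sigma> ` U. init_ideal n lo (ideal_comp n I' T) = J" using J eq by auto
qed

lemma gin_ideal_comp:
  assumes s: "is_mat n \<sigma>" and inv1: "mat_mult n \<sigma> \<sigma>' = mat_id n" and inv2: "mat_mult n \<sigma>' \<sigma> = mat_id n"
  shows "gin n lo (ideal_comp n I \<sigma>) = gin n lo I"
proof -
  have "(\<exists>U. dense_open_GL n U \<and> (\<forall>T\<in>U. init_ideal n lo (ideal_comp n (ideal_comp n I \<sigma>) T) = J)) \<longleftrightarrow>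
        (\<exists>U. dense_open_GL n U \<and> (\<forall>T\<in>U. init_ideal n lo (ideal_comp n I T) = J))" for J
  proof
    assume "\<exists>U. dense_open_GL n U \<and> (\<forall>T\<in>U. init_ideal n lo (ideal_comp n (ideal_comp n I \<sigma>) T) = J)"
    then obtain U where "dense_open_GL n U" "\<forall>T\<in>U. init_ideal n lo (ideal_comp n (ideal_comp n I \<sigma>) T) = J"
      by blast
    then show "\<exists>U. dense_open_GL n U \<and> (\<forall>T\<in>U. init_ideal n lo (ideal_comp n I T) = J)"
      by (rule gin_witness_transfer[OF _ _ inv1 inv2]) (simp add: ideal_comp_comp[OF s])
  next
    assume "\<exists>U. dense_open_GL n U \<and> (\<forall>T\<in>U. init_ideal n lo (ideal_comp n I T) = J)"
    then obtain U where "dense_open_GL n U" "\<forall>T\<in>U. init_ideal n lo (ideal_comp n I T) = J"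
      by blast
    then show "\<exists>U. dense_open_GL n U \<and> (\<forall>T\<in>U. init_ideal n lo (ideal_comp n (ideal_comp n I \<sigma>) T) = J)"
      by (rule gin_witness_transfer[OF _ _ inv2 inv1])
        (simp add: ideal_comp_comp[OF s] mat_mult_assoc inv1 mat_mult_id_left)
  qed
  then show ?thesis unfolding gin_def by simp
qed



section \<open>Quotients of equivalent maps\<close>

lemma continuous_on_bieval:
  assumes "\<And>i. continuous_on UNIV (\<lambda>\<epsilon>::real. Y \<epsilon> i)"
  shows "continuous_on UNIV (\<lambda>\<epsilon>. bieval q (Y \<epsilon>))"
  unfolding bieval_def mval_def split_def
  by (intro continuous_intros assms)

lemma continuous_on_mat_app:
  assumes "\<And>i. continuous_on UNIV (\<lambda>\<epsilon>::real. Y \<epsilon> i)"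
  shows "continuous_on UNIV (\<lambda>\<epsilon>. mat_app n T (Y \<epsilon>) i)"
proof (cases "i \<le> n")
  case True then show ?thesis unfolding mat_app_def by (simp, intro continuous_intros assms)
qed (simp add: mat_app_def)

lemma continuous_on_shift_coord0: "continuous_on UNIV (\<lambda>\<epsilon>::real. Z i + (if i = 0 then complex_of_real \<epsilon> else 0))"
  by (cases "i = 0") (simp_all, intro continuous_intros)

lemma hform_shift_coord0:
  "hform b n (\<lambda>j. Z j + (if j = 0 then complex_of_real \<epsilon> else 0)) =
     hform b n Z - (2 * \<epsilon> * Re (Z 0) + \<epsilon>\<^sup>2)"
proof -
  let ?Y = "\<lambda>j. Z j + (if j = 0 then complex_of_real \<epsilon> else 0)"
  have s1: "(\<Sum>j\<in>{..b}. (cmod (?Y j))\<^sup>2) = (cmod (?Y 0))\<^sup>2 + (\<Sum>j\<in>{..b} - {0}. (cmod (Z j))\<^sup>2)"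
    by (subst sum.remove[of _ 0]) auto
  have s2: "(\<Sum>j\<in>{..b}. (cmod (Z j))\<^sup>2) = (cmod (Z 0))\<^sup>2 + (\<Sum>j\<in>{..b} - {0}. (cmod (Z j))\<^sup>2)"
    by (subst sum.remove[of _ 0]) auto
  have s3: "(\<Sum>j\<in>{b+1..n}. (cmod (?Y j))\<^sup>2) = (\<Sum>j\<in>{b+1..n}. (cmod (Z j))\<^sup>2)"
    by (intro sum.cong) auto
  have c: "(cmod (Z 0 + complex_of_real \<epsilon>))\<^sup>2 = (cmod (Z 0))\<^sup>2 + (2 * \<epsilon> * Re (Z 0) + \<epsilon>\<^sup>2)"
    unfolding cmod_power2 by (simp add: power2_eq_square algebra_simps)
  show ?thesis unfolding hform_def s1 s2 s3 using c by simp
qed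

lemma map_val_comp:
  assumes comp: "\<forall>k\<le>N. \<forall>Z. eval (F k) (mat_app n \<tau> Z) = (\<Sum>j\<le>N. \<chi> k j * eval (G j) Z)"
  shows "map_val N F (mat_app n \<tau> Z) = mat_app N \<chi> (map_val N G Z)"
proof
  fix k show "map_val N F (mat_app n \<tau> Z) k = mat_app N \<chi> (map_val N G Z) k"
    using comp by (auto simp: map_val_def mat_app_def intro!: sum.cong)
qed

lemma eq_0_if_eq_0_off_null_cone:
  fixes g :: "(nat \<Rightarrow> complex) \<Rightarrow> complex"
  assumes cont: "\<And>Y. (\<And>i. continuous_on UNIV (\<lambda>\<epsilon>::real. Y \<epsilon> i)) \<Longrightarrow> continuous_on UNIV (\<lambda>\<epsilon>. g (Y \<epsilon>))"
    and off_cone: "\<And>Z. hform b n Z \<noteq> 0 \<Longrightarrow> g Z = 0"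
  shows "g Z = 0"
proof (cases "hform b n Z = 0")
  case False then show ?thesis by (rule off_cone)
next
  case True
  define Y where "Y \<epsilon> = (\<lambda>j. Z j + (if j = 0 then complex_of_real \<epsilon> else 0))" for \<epsilon>
  have "continuous_on UNIV (\<lambda>\<epsilon>. g (Y \<epsilon>))"
    unfolding Y_def by (rule cont) (rule continuous_on_shift_coord0)
  moreover have "Y 0 = Z" by (rule ext) (simp add: Y_def)
  ultimately have lim: "((\<lambda>\<epsilon>. g (Y \<epsilon>)) \<longlongrightarrow> g Z) (at_right 0)"
    by (metis continuous_on_def UNIV_I tendsto_within_subset top_greatest)
  \<comment> \<open>Moving Z 0 along the real axis leaves the null cone at once, except possibly at one
      second value of \<epsilon>, namely - 2 Re (Z 0); staying below it keeps Y \<epsilon> off the cone.\<close>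
  define \<delta> where "\<delta> = (if Re (Z 0) < 0 then - 2 * Re (Z 0) else 1)"
  have "\<delta> > 0" by (simp add: \<delta>_def)
  then have "eventually (\<lambda>\<epsilon>::real. 0 < \<epsilon> \<and> \<epsilon> < \<delta>) (at_right 0)"
    by (simp add: eventually_conj eventually_at_right_less eventually_at_right_field) blast
  then have "eventually (\<lambda>\<epsilon>. g (Y \<epsilon>) = 0) (at_right 0)"
  proof eventually_elim
    case (elim \<epsilon>)
    then have "\<epsilon> * (2 * Re (Z 0) + \<epsilon>) \<noteq> 0"
      by (cases "Re (Z 0) < 0") (auto simp: \<delta>_def mult_pos_neg)
    then have "hform b n (Y \<epsilon>) \<noteq> 0"
      using True by (simp add: Y_def hform_shift_coord0 power2_eq_square algebra_simps)
    then show ?case by (rule off_cone)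
  qed
  then have "((\<lambda>\<epsilon>. g (Y \<epsilon>)) \<longlongrightarrow> 0) (at_right 0)"
    by (rule tendsto_eventually)
  then show ?thesis using lim tendsto_unique[OF trivial_limit_at_right_real] by blast
qed

lemma quotient_transport:
  assumes qF: "is_quotient a b A B F qF" and qG: "is_quotient a b A B G qG"
    and tau: "aut_HQ a b \<tau>" and chi: "aut_HQ A B \<chi>"
    and comp: "\<forall>k\<le>A+B. \<forall>Z. eval (F k) (mat_app (a+b) \<tau> Z) = (\<Sum>j\<le>A+B. \<chi> k j * eval (G j) Z)"
  shows "\<exists>\<kappa>. \<kappa> \<noteq> 0 \<and> (\<forall>Z. bieval qG Z = complex_of_real \<kappa> * bieval qF (mat_app (a+b) \<tau> Z))"
proof -
  obtain ct where ct: "ct \<noteq> 0" "\<And>Z. hform b (a+b) (mat_app (a+b) \<tau> Z) = ct * hform b (a+b) Z"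
    using tau by (auto simp: aut_HQ_def)
  obtain cc where cc: "cc \<noteq> 0" "\<And>W. hform B (A+B) (mat_app (A+B) \<chi> W) = cc * hform B (A+B) W"
    using chi by (auto simp: aut_HQ_def)
  have eF: "complex_of_real (hform B (A+B) (map_val (A+B) F W)) = complex_of_real (hform b (a+b) W) * bieval qF W" for W
    using qF by (simp add: is_quotient_def)
  have eG: "complex_of_real (hform B (A+B) (map_val (A+B) G W)) = complex_of_real (hform b (a+b) W) * bieval qG W" for W
    using qG by (simp add: is_quotient_def)
  define \<kappa> where "\<kappa> = ct / cc"
  define g where "g Z = bieval qG Z - complex_of_real \<kappa> * bieval qF (mat_app (a+b) \<tau> Z)" for Z
  have "g Z = 0" for Z
  proof (rule eq_0_if_eq_0_off_null_cone[where g=g])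
    fix Y :: "real \<Rightarrow> nat \<Rightarrow> complex" assume Y: "\<And>i. continuous_on UNIV (\<lambda>\<epsilon>. Y \<epsilon> i)"
    then show "continuous_on UNIV (\<lambda>\<epsilon>. g (Y \<epsilon>))"
      unfolding g_def by (intro continuous_intros continuous_on_bieval continuous_on_mat_app Y)
  next
    fix Z assume hz: "hform b (a+b) Z \<noteq> 0"
    have "complex_of_real cc * (complex_of_real (hform b (a+b) Z) * bieval qG Z)
        = complex_of_real (hform B (A+B) (map_val (A+B) F (mat_app (a+b) \<tau> Z)))"
      by (simp add: map_val_comp[OF comp] cc(2) eG[symmetric])
    also have "\<dots> = complex_of_real ct * (complex_of_real (hform b (a+b) Z) * bieval qF (mat_app (a+b) \<tau> Z))"
      by (simp add: eF ct(2))
    finally have "complex_of_real (hform b (a+b) Z) * (complex_of_real cc * bieval qG Z) =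
        complex_of_real (hform b (a+b) Z) * (complex_of_real ct * bieval qF (mat_app (a+b) \<tau> Z))"
      by (simp add: mult_ac)
    then show "g Z = 0"
      using hz cc(1) by (simp add: g_def \<kappa>_def field_simps)
  qed
  moreover have "\<kappa> \<noteq> 0" using ct cc by (simp add: \<kappa>_def)
  ultimately show ?thesis unfolding g_def by auto
qed

lemma IH_eq_ideal_gen_hol_decomp:
  assumes "hol_decomp n q hp hm"
  shows "\<exists>hp' hm'. hol_decomp n q hp' hm' \<and> IH n q = ideal_gen n (set hp' \<union> set hm')"
proof -
  define P where "P = (\<lambda>(hp, hm). hol_decomp n q hp hm)"
  have "P (hp, hm)" using assms by (simp add: P_def)
  then have Ps: "P (SOME x. P x)" by (rule someI)
  obtain x1 x2 where x: "(SOME x. P x) = (x1, x2)" by (cases "SOME x. P x")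
  have "IH n q = ideal_gen n (set x1 \<union> set x2)" unfolding IH_def P_def[symmetric] x by simp
  then show ?thesis using Ps x by (auto simp: P_def)
qed

lemma IH_eq_if_no_hol_decomp:
  assumes "\<forall>hp hm. \<not> hol_decomp n q hp hm" "\<forall>hp hm. \<not> hol_decomp n q' hp hm"
  shows "IH n q = IH n q'"
proof -
  have "(\<lambda>(hp, hm). hol_decomp n q hp hm) = (\<lambda>(hp, hm). hol_decomp n q' hp hm)"
    using assms by (auto simp: fun_eq_iff)
  then show ?thesis unfolding IH_def by simp
qed

lemma invertible_mat_two_sided_inverse:
  assumes "Defs.invertible_mat n T"
  obtains T' where "is_mat n T'" "mat_left_inv n T' T" "mat_left_inv n T T'"
proof -
  obtain S where S: "mat_left_inv n S T"
    using assms by (auto simp: Defs.invertible_mat_def mat_left_inv_def)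
  define T' where "T' i j = (if i \<le> n \<and> j \<le> n then S i j else 0)" for i j
  have "is_mat n T'" by (simp add: is_mat_def T'_def)
  moreover have "mat_left_inv n T' T"
    using S unfolding mat_left_inv_def T'_def by (auto intro: sum.cong)
  ultimately show ?thesis using that mat_left_inv_imp_right_inv by blast
qed

text \<open>If neither quotient admits a holomorphic decomposition, both ideals are the same
  junk value of the choice operator in IH; otherwise the decomposition of one quotient
  is carried to a decomposition of the other by the linear substitution.\<close>
lemma gin_IH_eq_if_bieval_related:
  assumes T: "is_mat n T" "is_mat n T'" "mat_left_inv n T' T" "mat_left_inv n T T'"
    and \<kappa>: "\<kappa> \<noteq> 0" and rel: "\<And>Z. bieval qG Z = complex_of_real \<kappa> * bieval qF (mat_app n T Z)"
    and varsF: "\<forall>(\<alpha>,\<beta>)\<in>Poly_Mapping.keys qF. mon_in_vars n \<alpha> \<and> mon_in_vars n \<beta>"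
  shows "gin n lo (IH n qG) = gin n lo (IH n qF)"
proof (cases "\<exists>hp hm. hol_decomp n qF hp hm")
  case True
  then obtain hp hm where dF: "hol_decomp n qF hp hm" and IHF: "IH n qF = ideal_gen n (set hp \<union> set hm)"
    using IH_eq_ideal_gen_hol_decomp by blast
  obtain kp km where dG: "hol_decomp n qG kp km"
    and kset: "set kp \<union> set km = scaled_subst n (complex_of_real (sqrt \<bar>\<kappa>\<bar>)) T ` (set hp \<union> set hm)"
    using hol_decomp_transport[OF dF rel \<kappa> T(1,4)] by blast
  obtain kp' km' where dG': "hol_decomp n qG kp' km'" and IHG: "IH n qG = ideal_gen n (set kp' \<union> set km')"
    using IH_eq_ideal_gen_hol_decomp[OF dG] by blast
  have "IH n qG = ideal_gen n (set kp \<union> set km)" using IHG hol_decomp_ideal_unique[OF dG' dG] by simp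
  also have "\<dots> = ideal_comp n (IH n qF) T"
    unfolding kset IHF ideal_comp_def using \<kappa> by (intro ideal_gen_scaled_subst_image[OF _ T(1-3)]) simp
  finally show ?thesis
    using gin_ideal_comp[OF T(1)] T(3,4) by (simp add: mat_left_inv_iff)
next
  case False
  have rel': "bieval qF W = complex_of_real (1/\<kappa>) * bieval qG (mat_app n T' W)" for W
    using rel[of "mat_app n T' W"] \<kappa>
    by (simp add: mat_app_left_inv[OF T(4)] bieval_trunc_vec[OF varsF] field_simps)
  have "\<not> hol_decomp n qG kp km" for kp km
    using hol_decomp_transport[where qF=qG and qG=qF, OF _ rel' _ T(2,3)] \<kappa> False by auto
  then show ?thesis using False IH_eq_if_no_hol_decomp by metis
qed

theorem mainTheorem3:
  fixes a b A B :: nat and F G :: "nat \<Rightarrow> cpoly" and \<tau> \<chi> :: "nat \<Rightarrow> nat \<Rightarrow> complex"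
    and qF qG :: bpoly and le :: "mon \<Rightarrow> mon \<Rightarrow> bool"
  assumes F_map: "hom_poly_map (a+b) (A+B) F" and F_nz: "\<exists>k\<le>A+B. F k \<noteq> 0"
    and G_map: "hom_poly_map (a+b) (A+B) G" and G_nz: "\<exists>k\<le>A+B. G k \<noteq> 0"
    and F_HQ: "maps_HQ a b A B F" and G_HQ: "maps_HQ a b A B G"
    and tau: "aut_HQ a b \<tau>" and chi: "aut_HQ A B \<chi>"
    and comp: "\<forall>k\<le>A+B. \<forall>Z. eval (F k) (mat_app (a+b) \<tau> Z) = (\<Sum>j\<le>A+B. \<chi> k j * eval (G j) Z)"
    and qF: "is_quotient a b A B F qF" and qG: "is_quotient a b A B G qG"
    and ord: "mono_order (a+b) le"
  shows "gin (a+b) le (IH (a+b) qF) = gin (a+b) le (IH (a+b) qG)"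
proof -
  obtain \<kappa> where \<kappa>: "\<kappa> \<noteq> 0" and rel: "\<And>Z. bieval qG Z = complex_of_real \<kappa> * bieval qF (mat_app (a+b) \<tau> Z)"
    using quotient_transport[OF qF qG tau chi comp] by blast
  have inv: "Defs.invertible_mat (a+b) \<tau>" using tau by (simp add: aut_HQ_def)
  then obtain \<tau>' where \<tau>': "is_mat (a+b) \<tau>'" "mat_left_inv (a+b) \<tau>' \<tau>" "mat_left_inv (a+b) \<tau> \<tau>'"
    by (rule invertible_mat_two_sided_inverse)
  have "is_mat (a+b) \<tau>" using inv by (simp add: Defs.invertible_mat_def)
  moreover have "\<forall>(\<alpha>,\<beta>)\<in>Poly_Mapping.keys qF. mon_in_vars (a+b) \<alpha> \<and> mon_in_vars (a+b) \<beta>"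
    using qF by (simp add: is_quotient_def)
  ultimately show ?thesis
    using gin_IH_eq_if_bieval_related[OF _ \<tau>' \<kappa> rel] by simp
qed

end
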